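(* Let $\mathfrak V$ be a subvariety of the variety $\mathfrak B$ of all bicommutative algebras over $K$, and suppose $\mathfrak V$ satisfies a polynomial identity $f=0$, where $0\neq f\in F(\mathfrak B)$ has degree $k$. Then there is a polynomial $P(n)$ of degree $k-1$ such that $c_n(\mathfrak V)\le P(n)$ for all $n\ge 1$. In particular $\limsup_{n\to\infty}\sqrt[n]{c_n(\mathfrak V)}\le 1$, whereas $c_n(\mathfrak B)=2^n-2$ for $n\ge2$, so $\exp(\mathfrak B)=2$ and every proper subvariety of $\mathfrak B$ has codimension growth of exponent at most $1$.
   Context: $K$ is a field of characteristic $0$; all algebras are (not necessarily associative) $K$-algebras. An algebra is bicommutative if it satisfies the identities $(x_1x_2)x_3=(x_1x_3)x_2$ and $x_1(x_2x_3)=x_2(x_1x_3)$. $\mathfrak B$ denotes the variety of all bicommutative algebras, $F(\mathfrak B)$ its free algebra on countably many generators $x_1,x_2,\ldots$, and $F_d(\mathfrak B)$ its free algebra on $x_1,\dots,x_d$. A variety $\mathfrak V\subseteq\mathfrak B$ satisfies $f=0$ if $f$ lies in the T-ideal of $\mathfrak V$ (i.e. $f$ vanishes under all substitutions in all algebras of $\mathfrak V$). For a variety $\mathfrak V$, $P_n(\mathfrak V)$ is the space of multilinear elements of degree $n$ in $x_1,\dots,x_n$ of the relatively free algebra $F_n(\mathfrak V)$, and the $n$-th codimension is $c_n(\mathfrak V)=\dim P_n(\mathfrak V)$. The fact $c_1(\mathfrak B)=1$, $c_n(\mathfrak B)=2^n-2$ for $n\ge 2$ is known. *)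

theory Defs
  imports "HOL-Library.Poly_Mapping" "HOL-Computational_Algebra.Polynomial"
    "HOL-Library.Liminf_Limsup" "HOL-Library.Extended_Real" Complex_Main
begin

datatype nmon = Var nat | Mul nmon nmon

text \<open>Elements of the free nonassociative algebra: finite K-linear combinations of monomials.\<close>
type_synonym 'k nalg = "nmon \<Rightarrow>\<^sub>0 'k"

definition smult_na :: "'k::field \<Rightarrow> 'k nalg \<Rightarrow> 'k nalg" where
  "smult_na c p = Poly_Mapping.map (\<lambda>a. c * a) p"

definition mon :: "nmon \<Rightarrow> 'k::field nalg" where
  "mon t = Poly_Mapping.single t 1"

definition mul_na :: "'k::field nalg \<Rightarrow> 'k nalg \<Rightarrow> 'k nalg" where
  "mul_na p q = (\<Sum>a\<in>Poly_Mapping.keys p. \<Sum>b\<in>Poly_Mapping.keys q.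
       Poly_Mapping.single (Mul a b) (Poly_Mapping.lookup p a * Poly_Mapping.lookup q b))"

fun subst_mon :: "(nat \<Rightarrow> 'k::field nalg) \<Rightarrow> nmon \<Rightarrow> 'k nalg" where
  "subst_mon s (Var i) = s i"
| "subst_mon s (Mul a b) = mul_na (subst_mon s a) (subst_mon s b)"

definition subst_na :: "(nat \<Rightarrow> 'k::field nalg) \<Rightarrow> 'k nalg \<Rightarrow> 'k nalg" where
  "subst_na s p = (\<Sum>t\<in>Poly_Mapping.keys p. smult_na (Poly_Mapping.lookup p t) (subst_mon s t))"

definition T_ideal :: "'k::field nalg set \<Rightarrow> bool" where
  "T_ideal I \<longleftrightarrow> 0 \<in> I
     \<and> (\<forall>p\<in>I. \<forall>q\<in>I. p + q \<in> I)
     \<and> (\<forall>c. \<forall>p\<in>I. smult_na c p \<in> I)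
     \<and> (\<forall>p\<in>I. \<forall>q. mul_na p q \<in> I \<and> mul_na q p \<in> I)
     \<and> (\<forall>p\<in>I. \<forall>s. subst_na s p \<in> I)"

definition bicomm_ids :: "'k::field nalg set" where
  "bicomm_ids = {mon (Mul (Mul (Var 1) (Var 2)) (Var 3)) - mon (Mul (Mul (Var 1) (Var 3)) (Var 2)),
                 mon (Mul (Var 1) (Mul (Var 2) (Var 3))) - mon (Mul (Var 2) (Mul (Var 1) (Var 3)))}"

text \<open>T(B): the T-ideal of the variety of all bicommutative algebras,
  so that F(B) is the quotient of the absolutely free algebra by T_B.\<close>
definition T_B :: "'k::field nalg set" where
  "T_B = \<Inter>{I. T_ideal I \<and> bicomm_ids \<subseteq> I}"

text \<open>A subvariety V of B is given by its T-ideal T(V), a T-ideal containing T(B).\<close>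
definition subvariety_B :: "'k::field nalg set \<Rightarrow> bool" where
  "subvariety_B I \<longleftrightarrow> T_ideal I \<and> T_B \<subseteq> I"

fun leaves :: "nmon \<Rightarrow> nat list" where
  "leaves (Var i) = [i]"
| "leaves (Mul a b) = leaves a @ leaves b"

definition mdeg :: "nmon \<Rightarrow> nat" where
  "mdeg t = length (leaves t)"

definition deg_FB :: "'k::field nalg \<Rightarrow> nat" where
  "deg_FB f = (LEAST d. \<exists>g. f - g \<in> T_B \<and> (\<forall>t\<in>Poly_Mapping.keys g. mdeg t \<le> d))"

definition multilin_mons :: "nat \<Rightarrow> nmon set" where
  "multilin_mons n = {t. mset (leaves t) = mset [1..<n+1]}"

definition indep_mod :: "'k::field nalg set \<Rightarrow> nmon set \<Rightarrow> bool" where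
  "indep_mod I S \<longleftrightarrow> (\<forall>c. (\<Sum>t\<in>S. smult_na (c t) (mon t)) \<in> I \<longrightarrow> (\<forall>t\<in>S. c t = 0))"

text \<open>c_n(V) = dim P_n(V), where P_n(V) is spanned by the images of the multilinear monomials.\<close>
definition codim :: "'k::field nalg set \<Rightarrow> nat \<Rightarrow> nat" where
  "codim I n = Max {card S | S. S \<subseteq> multilin_mons n \<and> indep_mod I S}"

end

theory Submission
  imports Defs
begin

text \<open>
  Modulo \<open>T(B)\<close> a monomial of degree at least two is determined by its multiset of variables
  together with the multiset of its left variables: both bicommutative identities preserve
  these, and every monomial can be rewritten to a normal form \<open>normal_mon\<close> in which only
  these two multisets matter. A multilinear monomial of degree \<open>n\<close> is therefore determined,
  modulo \<open>T(B)\<close>, by its left set \<open>L \<subseteq> {1..n}\<close>.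

  In characteristic \<open>0\<close>, taking multihomogeneous components and linearizing turns an identity
  \<open>f \<notin> T(B)\<close> of degree \<open>k\<close> into a multilinear identity \<open>G \<notin> T(B)\<close> in a set \<open>V\<close> of at
  most \<open>k\<close> variables. Let \<open>\<beta>(S, T)\<close> be the sum of the coefficients of those monomials of
  \<open>G\<close> whose left set meets \<open>S\<close> in \<open>T\<close>. Some \<open>\<beta>(V, T)\<close> is nonzero since \<open>G \<notin> T(B)\<close>, and
  \<open>\<beta>(S - {i}, T) = \<beta>(S, T) + \<beta>(S, T \<union> {i})\<close>, so for a minimal \<open>S\<close> with some
  \<open>\<beta>(S, T) \<noteq> 0\<close> we get \<open>\<beta>(S, S) \<noteq> 0\<close>, and \<open>S \<noteq> V\<close>. Substituting variables for the
  elements of \<open>S\<close> and products of two variables for those of \<open>V - S\<close>, and padding with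
  further variables, rewrites any multilinear monomial whose left and right sets both have at
  least \<open>k\<close> elements modulo \<open>T(V)\<close> as a combination of monomials with smaller left sets.
  Hence \<open>P\<^sub>n(V)\<close> is spanned by the monomials with \<open>|L| < k\<close> or \<open>n - |L| < k\<close>, and there are
  at most \<open>2 k n^(k - 1)\<close> such left sets.
\<close>

lemma lookup_smult_na [simp]: "Poly_Mapping.lookup (smult_na c p) t = c * Poly_Mapping.lookup p t"
  unfolding smult_na_def by (simp add: map.rep_eq when_def)

lemma lookup_mon: "Poly_Mapping.lookup (mon t) u = (if t = u then 1 else 0)"
  unfolding mon_def by (simp add: lookup_single when_def)

lemma smult_na_add: "smult_na c (p + q) = smult_na c p + smult_na c q"
  by (rule poly_mapping_eqI) (simp add: lookup_add algebra_simps)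
lemma smult_na_add_left: "smult_na (a + b) p = smult_na a p + smult_na b p"
  by (rule poly_mapping_eqI) (simp add: lookup_add algebra_simps)
lemma smult_na_diff: "smult_na c (p - q) = smult_na c p - smult_na c q"
  by (rule poly_mapping_eqI) (simp add: lookup_minus algebra_simps)
lemma smult_na_smult [simp]: "smult_na a (smult_na b p) = smult_na (a * b) p"
  by (rule poly_mapping_eqI) (simp add: algebra_simps)
lemma smult_na_one [simp]: "smult_na 1 p = p"
  by (rule poly_mapping_eqI) simp
lemma smult_na_minus1: "smult_na (-1) p = - p"
  by (rule poly_mapping_eqI) simp
lemma smult_na_sum: "smult_na c (sum f A) = (\<Sum>x\<in>A. smult_na c (f x))"
  by (rule poly_mapping_eqI) (simp add: lookup_sum sum_distrib_left)
lemma smult_na_sum_left: "smult_na (sum f A) p = (\<Sum>x\<in>A. smult_na (f x) p)"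
  by (rule poly_mapping_eqI) (simp add: lookup_sum sum_distrib_right)
lemma smult_single: "smult_na c (Poly_Mapping.single t a) = Poly_Mapping.single t (c * a)"
  by (rule poly_mapping_eqI) (simp add: lookup_single when_def)
lemma smult_mon: "smult_na c (mon t) = Poly_Mapping.single t c"
  unfolding mon_def by (simp add: smult_single)

interpretation nvs: vector_space "smult_na :: 'k::field \<Rightarrow> 'k nalg \<Rightarrow> 'k nalg"
  by unfold_locales (simp_all add: smult_na_add smult_na_add_left)

lemma nalg_expansion_superset:
  assumes "finite A" "Poly_Mapping.keys p \<subseteq> A"
  shows "p = (\<Sum>t\<in>A. smult_na (Poly_Mapping.lookup p t) (mon t))"
proof (rule poly_mapping_eqI)
  fix u
  have "(\<Sum>t\<in>A. Poly_Mapping.lookup (smult_na (Poly_Mapping.lookup p t) (mon t)) u)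
      = (\<Sum>t\<in>A. if t = u then Poly_Mapping.lookup p t else 0)"
    by (intro sum.cong) (auto simp: lookup_mon)
  also have "\<dots> = Poly_Mapping.lookup p u"
    using assms by (auto simp: sum.delta in_keys_iff)
  finally show "Poly_Mapping.lookup p u = Poly_Mapping.lookup (\<Sum>t\<in>A. smult_na (Poly_Mapping.lookup p t) (mon t)) u"
    by (simp add: lookup_sum)
qed

lemma nalg_expansion: "p = (\<Sum>t\<in>Poly_Mapping.keys p. smult_na (Poly_Mapping.lookup p t) (mon t))"
  by (rule nalg_expansion_superset) auto

lemma lookup_mul_na:
  "Poly_Mapping.lookup (mul_na p q) m =
     (case m of Var i \<Rightarrow> 0 | Mul a b \<Rightarrow> Poly_Mapping.lookup p a * Poly_Mapping.lookup q b)"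
proof -
  have "Poly_Mapping.lookup (mul_na p q) m = (\<Sum>a\<in>Poly_Mapping.keys p. \<Sum>b\<in>Poly_Mapping.keys q.
        if Mul a b = m then Poly_Mapping.lookup p a * Poly_Mapping.lookup q b else 0)"
    unfolding mul_na_def by (simp add: lookup_sum lookup_single when_def)
  also have "\<dots> = (case m of Var i \<Rightarrow> 0 | Mul a b \<Rightarrow> Poly_Mapping.lookup p a * Poly_Mapping.lookup q b)"
  proof (cases m)
    case (Var i) then show ?thesis by simp
  next
    case (Mul a0 b0)
    have "(\<Sum>a\<in>Poly_Mapping.keys p. \<Sum>b\<in>Poly_Mapping.keys q.
        if Mul a b = m then Poly_Mapping.lookup p a * Poly_Mapping.lookup q b else 0)
      = (\<Sum>a\<in>Poly_Mapping.keys p. if a = a0 then Poly_Mapping.lookup p a * Poly_Mapping.lookup q b0 else 0)"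
      by (intro sum.cong) (auto simp: Mul sum.delta in_keys_iff)
    also have "\<dots> = Poly_Mapping.lookup p a0 * Poly_Mapping.lookup q b0"
      by (auto simp: sum.delta in_keys_iff)
    finally show ?thesis by (simp add: Mul)
  qed
  finally show ?thesis .
qed

lemma mul_na_add_left: "mul_na (p + q) r = mul_na p r + mul_na q r"
  by (rule poly_mapping_eqI) (simp add: lookup_mul_na lookup_add split: nmon.split; simp add: algebra_simps)
lemma mul_na_add_right: "mul_na r (p + q) = mul_na r p + mul_na r q"
  by (rule poly_mapping_eqI) (simp add: lookup_mul_na lookup_add split: nmon.split; simp add: algebra_simps)
lemma mul_na_diff_left: "mul_na (p - q) r = mul_na p r - mul_na q r"
  by (rule poly_mapping_eqI) (simp add: lookup_mul_na lookup_minus split: nmon.split; simp add: algebra_simps)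
lemma mul_na_diff_right: "mul_na r (p - q) = mul_na r p - mul_na r q"
  by (rule poly_mapping_eqI) (simp add: lookup_mul_na lookup_minus split: nmon.split; simp add: algebra_simps)
lemma mul_na_smult_left: "mul_na (smult_na c p) r = smult_na c (mul_na p r)"
  by (rule poly_mapping_eqI) (simp add: lookup_mul_na split: nmon.split)
lemma mul_na_smult_right: "mul_na r (smult_na c p) = smult_na c (mul_na r p)"
  by (rule poly_mapping_eqI) (simp add: lookup_mul_na split: nmon.split; simp add: algebra_simps)
lemma mul_na_zero_left [simp]: "mul_na 0 r = 0"
  by (rule poly_mapping_eqI) (simp add: lookup_mul_na split: nmon.split)
lemma mul_na_zero_right [simp]: "mul_na r 0 = 0"
  by (rule poly_mapping_eqI) (simp add: lookup_mul_na split: nmon.split)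
lemma mul_na_mon: "mul_na (mon a) (mon b) = mon (Mul a b)"
  by (rule poly_mapping_eqI) (simp add: lookup_mul_na lookup_mon split: nmon.split)
lemma mul_na_sum_left: "mul_na (sum f A) r = (\<Sum>x\<in>A. mul_na (f x) r)"
  by (induction A rule: infinite_finite_induct) (simp_all add: mul_na_add_left)
lemma mul_na_sum_right: "mul_na r (sum f A) = (\<Sum>x\<in>A. mul_na r (f x))"
  by (induction A rule: infinite_finite_induct) (simp_all add: mul_na_add_right)

lemma keys_mul_na: "m \<in> Poly_Mapping.keys (mul_na p q) \<Longrightarrow>
   \<exists>a b. m = Mul a b \<and> a \<in> Poly_Mapping.keys p \<and> b \<in> Poly_Mapping.keys q"
  by (cases m) (auto simp: in_keys_iff lookup_mul_na)

lemma subst_na_superset: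
  assumes "finite A" "Poly_Mapping.keys p \<subseteq> A"
  shows "subst_na s p = (\<Sum>t\<in>A. smult_na (Poly_Mapping.lookup p t) (subst_mon s t))"
  unfolding subst_na_def
  using assms by (intro sum.mono_neutral_left) (auto simp: in_keys_iff)

lemma subst_na_add: "subst_na s (p + q) = subst_na s p + subst_na s q"
proof -
  let ?A = "Poly_Mapping.keys p \<union> Poly_Mapping.keys q"
  have f: "finite ?A" by auto
  have "subst_na s (p + q) = (\<Sum>t\<in>?A. smult_na (Poly_Mapping.lookup (p+q) t) (subst_mon s t))"
    using keys_add[of p q] by (intro subst_na_superset f) auto
  also have "\<dots> = (\<Sum>t\<in>?A. smult_na (Poly_Mapping.lookup p t) (subst_mon s t)) +
                  (\<Sum>t\<in>?A. smult_na (Poly_Mapping.lookup q t) (subst_mon s t))"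
    by (simp add: lookup_add smult_na_add_left sum.distrib)
  also have "\<dots> = subst_na s p + subst_na s q"
    by (simp add: subst_na_superset[OF f, symmetric])
  finally show ?thesis .
qed

lemma subst_na_smult: "subst_na s (smult_na c p) = smult_na c (subst_na s p)"
proof -
  have "subst_na s (smult_na c p) = (\<Sum>t\<in>Poly_Mapping.keys p. smult_na (Poly_Mapping.lookup (smult_na c p) t) (subst_mon s t))"
    by (rule subst_na_superset) (auto simp: in_keys_iff)
  then show ?thesis by (simp add: subst_na_def smult_na_sum)
qed

lemma subst_na_zero [simp]: "subst_na s 0 = 0"
  by (simp add: subst_na_def)

lemma subst_na_diff: "subst_na s (p - q) = subst_na s p - subst_na s q"
  using subst_na_add[of s "p - q" q] by (simp add: algebra_simps)

lemma subst_na_sum: "subst_na s (sum f A) = (\<Sum>x\<in>A. subst_na s (f x))"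
  by (induction A rule: infinite_finite_induct) (simp_all add: subst_na_add)

lemma subst_na_mon [simp]: "subst_na s (mon t) = subst_mon s t"
  by (simp add: subst_na_def mon_def)

lemma subst_na_mul: "subst_na s (mul_na p q) = mul_na (subst_na s p) (subst_na s q)"
proof -
  have "mul_na p q = (\<Sum>a\<in>Poly_Mapping.keys p. \<Sum>b\<in>Poly_Mapping.keys q.
        smult_na (Poly_Mapping.lookup p a * Poly_Mapping.lookup q b) (mon (Mul a b)))"
    unfolding mul_na_def by (simp add: smult_mon)
  then have "subst_na s (mul_na p q) = (\<Sum>a\<in>Poly_Mapping.keys p. \<Sum>b\<in>Poly_Mapping.keys q.
        smult_na (Poly_Mapping.lookup p a * Poly_Mapping.lookup q b)
          (mul_na (subst_mon s a) (subst_mon s b)))"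
    by (simp add: subst_na_sum subst_na_smult)
  also have "\<dots> = mul_na (\<Sum>a\<in>Poly_Mapping.keys p. smult_na (Poly_Mapping.lookup p a) (subst_mon s a))
                        (\<Sum>b\<in>Poly_Mapping.keys q. smult_na (Poly_Mapping.lookup q b) (subst_mon s b))"
    by (simp add: mul_na_sum_left mul_na_sum_right mul_na_smult_left mul_na_smult_right smult_na_sum,
        subst sum.swap, simp add: mult.commute)
  finally show ?thesis by (simp add: subst_na_def)
qed

fun mon_subst :: "(nat \<Rightarrow> nmon) \<Rightarrow> nmon \<Rightarrow> nmon" where
  "mon_subst \<sigma> (Var i) = \<sigma> i"
| "mon_subst \<sigma> (Mul a b) = Mul (mon_subst \<sigma> a) (mon_subst \<sigma> b)"

lemma subst_mon_mon_subst: "subst_mon (\<lambda>i. mon (\<sigma> i)) t = mon (mon_subst \<sigma> t)"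
  by (induction t) (simp_all add: mul_na_mon)

locale tideal =
  fixes I :: "'k::field nalg set"
  assumes TI: "T_ideal I"
begin
lemma zero: "0 \<in> I" using TI by (simp add: T_ideal_def)
lemma add: "p \<in> I \<Longrightarrow> q \<in> I \<Longrightarrow> p + q \<in> I" using TI by (simp add: T_ideal_def)
lemma smult: "p \<in> I \<Longrightarrow> smult_na c p \<in> I" using TI by (simp add: T_ideal_def)
lemma mul_left: "p \<in> I \<Longrightarrow> mul_na q p \<in> I" using TI by (simp add: T_ideal_def)
lemma mul_right: "p \<in> I \<Longrightarrow> mul_na p q \<in> I" using TI by (simp add: T_ideal_def)
lemma subst: "p \<in> I \<Longrightarrow> subst_na s p \<in> I" using TI by (simp add: T_ideal_def)
lemma uminus: "p \<in> I \<Longrightarrow> - p \<in> I" using smult[of p "-1"] by (simp add: smult_na_minus1)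
lemma diff: "p \<in> I \<Longrightarrow> q \<in> I \<Longrightarrow> p - q \<in> I" using add[OF _ uminus, of p q] by simp
lemma sum: "(\<And>x. x \<in> A \<Longrightarrow> f x \<in> I) \<Longrightarrow> sum f A \<in> I"
  by (induction A rule: infinite_finite_induct) (auto intro: zero add)
lemma smult_iff: "c \<noteq> 0 \<Longrightarrow> smult_na c p \<in> I \<longleftrightarrow> p \<in> I"
  using smult[of "smult_na c p" "inverse c"] by (auto intro: smult)
lemma add_iff: "q \<in> I \<Longrightarrow> p + q \<in> I \<longleftrightarrow> p \<in> I"
  using diff[of "p+q" q] by (auto intro: add)
end

lemma T_ideal_Inter: "(\<And>I. I \<in> C \<Longrightarrow> T_ideal I) \<Longrightarrow> T_ideal (\<Inter>C)"
  unfolding T_ideal_def by blast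

lemma T_ideal_T_B: "T_ideal T_B"
  unfolding T_B_def by (rule T_ideal_Inter) auto

interpretation TB: tideal T_B by unfold_locales (rule T_ideal_T_B)

lemma bicomm_ids_subset_T_B: "bicomm_ids \<subseteq> T_B"
  unfolding T_B_def by auto

section \<open>Congruence of monomials modulo T(B)\<close>

inductive bicomm_equiv :: "nmon \<Rightarrow> nmon \<Rightarrow> bool" (infix \<open>\<approx>\<close> 50) where
  refl: "t \<approx> t"
| sym: "t \<approx> u \<Longrightarrow> u \<approx> t"
| trans: "t \<approx> u \<Longrightarrow> u \<approx> v \<Longrightarrow> t \<approx> v"
| right_comm: "Mul (Mul p q) r \<approx> Mul (Mul p r) q"
| left_comm: "Mul p (Mul q r) \<approx> Mul q (Mul p r)"
| cong_left: "t \<approx> u \<Longrightarrow> Mul t v \<approx> Mul u v"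
| cong_right: "t \<approx> u \<Longrightarrow> Mul v t \<approx> Mul v u"

lemma bicomm_equiv_diff_in_T_B: "t \<approx> u \<Longrightarrow> (mon t - mon u :: 'k::field nalg) \<in> T_B"
proof (induction rule: bicomm_equiv.induct)
  case (refl t) then show ?case by (simp add: TB.zero)
next
  case (sym t u) then show ?case using TB.uminus by fastforce
next
  case (trans t u v) then show ?case using TB.add by fastforce
next
  case (right_comm p q r)
  let ?s = "\<lambda>i. mon (if i = 1 then p else if i = 2 then q else r) :: 'k nalg"
  have "mon (Mul (Mul (Var 1) (Var 2)) (Var 3)) - mon (Mul (Mul (Var 1) (Var 3)) (Var 2)) \<in> (T_B :: 'k nalg set)"
    using bicomm_ids_subset_T_B by (auto simp: bicomm_ids_def)
  from TB.subst[OF this, of ?s] show ?case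
    by (simp add: subst_na_diff subst_mon_mon_subst)
next
  case (left_comm p q r)
  let ?s = "\<lambda>i. mon (if i = 1 then p else if i = 2 then q else r) :: 'k nalg"
  have "mon (Mul (Var 1) (Mul (Var 2) (Var 3))) - mon (Mul (Var 2) (Mul (Var 1) (Var 3))) \<in> (T_B :: 'k nalg set)"
    using bicomm_ids_subset_T_B by (auto simp: bicomm_ids_def)
  from TB.subst[OF this, of ?s] show ?case
    by (simp add: subst_na_diff subst_mon_mon_subst)
next
  case (cong_left t u v)
  from TB.mul_right[OF cong_left.IH, of "mon v"] show ?case by (simp add: mul_na_diff_left mul_na_mon)
next
  case (cong_right t u v)
  from TB.mul_left[OF cong_right.IH, of "mon v"] show ?case by (simp add: mul_na_diff_right mul_na_mon)
qed

declare bicomm_equiv.trans[trans]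

definition is_Mul :: "nmon \<Rightarrow> bool" where "is_Mul t = (case t of Var i \<Rightarrow> False | Mul a b \<Rightarrow> True)"

lemma is_Mul_simps [simp]: "is_Mul (Var i) = False" "is_Mul (Mul a b) = True"
  by (simp_all add: is_Mul_def)

lemma bicomm_equiv_assoc: "is_Mul u \<Longrightarrow> Mul (Mul p u) s \<approx> Mul p (Mul u s)"
proof -
  assume "is_Mul u"
  then obtain q r where u: "u = Mul q r" by (cases u) auto
  have "Mul (Mul p (Mul q r)) s \<approx> Mul (Mul q (Mul p r)) s"
    by (intro bicomm_equiv.cong_left bicomm_equiv.left_comm)
  also have "\<dots> \<approx> Mul (Mul q s) (Mul p r)" by (rule bicomm_equiv.right_comm)
  also have "\<dots> \<approx> Mul p (Mul (Mul q s) r)" by (rule bicomm_equiv.left_comm)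
  also have "\<dots> \<approx> Mul p (Mul (Mul q r) s)" by (intro bicomm_equiv.cong_right bicomm_equiv.right_comm)
  finally show ?thesis unfolding u .
qed

text \<open>\<open>normal_mon a as b bs\<close> is \<open>x_a1 (x_a2 (... (x_am (((x_a x_b) x_b1) ... x_bn))))\<close>
  for \<open>as = [a1, ..., am]\<close> and \<open>bs = [b1, ..., bn]\<close>.\<close>

definition lmul_vars :: "nat list \<Rightarrow> nmon \<Rightarrow> nmon" where
  "lmul_vars as w = foldr (\<lambda>x t. Mul (Var x) t) as w"
definition rmul_vars :: "nmon \<Rightarrow> nat list \<Rightarrow> nmon" where
  "rmul_vars w bs = foldl (\<lambda>t y. Mul t (Var y)) w bs"
definition normal_mon :: "nat \<Rightarrow> nat list \<Rightarrow> nat \<Rightarrow> nat list \<Rightarrow> nmon" where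
  "normal_mon a as b bs = lmul_vars as (rmul_vars (Mul (Var a) (Var b)) bs)"

lemma lmul_vars_simps [simp]: "lmul_vars [] w = w" "lmul_vars (x # xs) w = Mul (Var x) (lmul_vars xs w)"
  "lmul_vars (xs @ ys) w = lmul_vars xs (lmul_vars ys w)"
  by (simp_all add: lmul_vars_def)
lemma rmul_vars_simps [simp]: "rmul_vars w [] = w" "rmul_vars w (y # ys) = rmul_vars (Mul w (Var y)) ys"
  "rmul_vars w (xs @ ys) = rmul_vars (rmul_vars w xs) ys" "rmul_vars w (xs @ [y]) = Mul (rmul_vars w xs) (Var y)"
  by (simp_all add: rmul_vars_def)

lemma is_Mul_lmul_vars: "is_Mul w \<Longrightarrow> is_Mul (lmul_vars as w)"
  by (cases as) auto
lemma is_Mul_rmul_vars: "is_Mul w \<Longrightarrow> is_Mul (rmul_vars w bs)"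
  by (induction bs arbitrary: w) auto

lemma lmul_vars_cong: "w \<approx> w' \<Longrightarrow> lmul_vars as w \<approx> lmul_vars as w'"
  by (induction as) (auto intro: bicomm_equiv.cong_right)
lemma rmul_vars_cong: "w \<approx> w' \<Longrightarrow> rmul_vars w bs \<approx> rmul_vars w' bs"
  by (induction bs arbitrary: w w') (auto intro: bicomm_equiv.cong_left)

lemma lmul_vars_move: "lmul_vars (ys @ x # zs) w \<approx> lmul_vars (x # ys @ zs) w"
proof (induction ys)
  case Nil then show ?case by (simp add: bicomm_equiv.refl)
next
  case (Cons y ys)
  have "lmul_vars ((y # ys) @ x # zs) w = Mul (Var y) (lmul_vars (ys @ x # zs) w)" by simp
  also have "\<dots> \<approx> Mul (Var y) (lmul_vars (x # ys @ zs) w)" by (intro bicomm_equiv.cong_right Cons)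
  also have "\<dots> = Mul (Var y) (Mul (Var x) (lmul_vars (ys @ zs) w))" by simp
  also have "\<dots> \<approx> Mul (Var x) (Mul (Var y) (lmul_vars (ys @ zs) w))" by (rule bicomm_equiv.left_comm)
  finally show ?case by (simp add: bicomm_equiv.trans)
qed

lemma lmul_vars_perm: "mset as = mset as' \<Longrightarrow> lmul_vars as w \<approx> lmul_vars as' w"
proof (induction as arbitrary: as')
  case Nil then show ?case by (simp add: bicomm_equiv.refl)
next
  case (Cons x xs)
  then have "x \<in> set as'" by (metis list.set_intros(1) set_mset_mset)
  then obtain ys zs where as': "as' = ys @ x # zs" by (meson split_list)
  have "mset xs = mset (ys @ zs)" using Cons.prems as' by simp
  then have "lmul_vars xs w \<approx> lmul_vars (ys @ zs) w" by (rule Cons.IH)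
  then have "lmul_vars (x # xs) w \<approx> lmul_vars (x # ys @ zs) w" by (simp add: bicomm_equiv.cong_right)
  moreover have "lmul_vars (x # ys @ zs) w \<approx> lmul_vars as' w" unfolding as' by (rule bicomm_equiv.sym, rule lmul_vars_move)
  ultimately show ?case by (rule bicomm_equiv.trans)
qed

lemma rmul_vars_move: "rmul_vars w (ys @ x # zs) \<approx> rmul_vars w (x # ys @ zs)"
proof (induction ys arbitrary: w)
  case Nil then show ?case by (simp add: bicomm_equiv.refl)
next
  case (Cons y ys)
  have "rmul_vars w ((y # ys) @ x # zs) = rmul_vars (Mul w (Var y)) (ys @ x # zs)" by simp
  also have "\<dots> \<approx> rmul_vars (Mul w (Var y)) (x # ys @ zs)" by (rule Cons)
  also have "\<dots> = rmul_vars (Mul (Mul w (Var y)) (Var x)) (ys @ zs)" by simp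
  also have "\<dots> \<approx> rmul_vars (Mul (Mul w (Var x)) (Var y)) (ys @ zs)" by (intro rmul_vars_cong bicomm_equiv.right_comm)
  finally show ?case by (simp add: bicomm_equiv.trans)
qed

lemma rmul_vars_perm: "mset bs = mset bs' \<Longrightarrow> rmul_vars w bs \<approx> rmul_vars w bs'"
proof (induction bs arbitrary: bs' w)
  case Nil then show ?case by (simp add: bicomm_equiv.refl)
next
  case (Cons x xs)
  then have "x \<in> set bs'" by (metis list.set_intros(1) set_mset_mset)
  then obtain ys zs where bs': "bs' = ys @ x # zs" by (meson split_list)
  have "mset xs = mset (ys @ zs)" using Cons.prems bs' by simp
  then have "rmul_vars (Mul w (Var x)) xs \<approx> rmul_vars (Mul w (Var x)) (ys @ zs)" by (rule Cons.IH)
  then have "rmul_vars w (x # xs) \<approx> rmul_vars w (x # ys @ zs)" by simp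
  moreover have "rmul_vars w (x # ys @ zs) \<approx> rmul_vars w bs'" unfolding bs' by (rule bicomm_equiv.sym, rule rmul_vars_move)
  ultimately show ?case by (rule bicomm_equiv.trans)
qed

lemma Mul_lmul_vars: "Mul X (lmul_vars as W) \<approx> lmul_vars as (Mul X W)"
proof (induction as)
  case Nil then show ?case by (simp add: bicomm_equiv.refl)
next
  case (Cons a as)
  have "Mul X (lmul_vars (a # as) W) \<approx> Mul (Var a) (Mul X (lmul_vars as W))" by (simp add: bicomm_equiv.left_comm)
  also have "\<dots> \<approx> Mul (Var a) (lmul_vars as (Mul X W))" by (intro bicomm_equiv.cong_right Cons)
  finally show ?case by (simp add: bicomm_equiv.trans)
qed

lemma lmul_vars_Mul: "is_Mul W \<Longrightarrow> Mul (lmul_vars as W) Y \<approx> lmul_vars as (Mul W Y)"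
proof (induction as)
  case Nil then show ?case by (simp add: bicomm_equiv.refl)
next
  case (Cons a as)
  have "Mul (lmul_vars (a # as) W) Y \<approx> Mul (Var a) (Mul (lmul_vars as W) Y)"
    by (simp add: bicomm_equiv_assoc is_Mul_lmul_vars Cons.prems)
  also have "\<dots> \<approx> Mul (Var a) (lmul_vars as (Mul W Y))" by (intro bicomm_equiv.cong_right Cons)
  finally show ?case by (simp add: bicomm_equiv.trans)
qed

lemma rmul_vars_lmul_vars: "is_Mul W \<Longrightarrow> rmul_vars (lmul_vars as W) bs \<approx> lmul_vars as (rmul_vars W bs)"
proof (induction bs arbitrary: W)
  case Nil then show ?case by (simp add: bicomm_equiv.refl)
next
  case (Cons b bs)
  have "rmul_vars (lmul_vars as W) (b # bs) = rmul_vars (Mul (lmul_vars as W) (Var b)) bs" by simp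
  also have "\<dots> \<approx> rmul_vars (lmul_vars as (Mul W (Var b))) bs" by (intro rmul_vars_cong lmul_vars_Mul Cons.prems)
  also have "\<dots> \<approx> lmul_vars as (rmul_vars (Mul W (Var b)) bs)" by (rule Cons.IH) simp
  finally show ?case by (simp add: bicomm_equiv.trans)
qed

lemma Mul_rmul_vars: "is_Mul W \<Longrightarrow> Mul X (rmul_vars W bs) \<approx> rmul_vars (Mul X W) bs"
proof (induction bs rule: rev_induct)
  case Nil then show ?case by (simp add: bicomm_equiv.refl)
next
  case (snoc b bs)
  have "Mul X (rmul_vars W (bs @ [b])) = Mul X (Mul (rmul_vars W bs) (Var b))" by simp
  also have "\<dots> \<approx> Mul (Mul X (rmul_vars W bs)) (Var b)"
    by (rule bicomm_equiv.sym, rule bicomm_equiv_assoc, rule is_Mul_rmul_vars, rule snoc.prems)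
  also have "\<dots> \<approx> Mul (rmul_vars (Mul X W) bs) (Var b)" by (intro bicomm_equiv.cong_left snoc.IH snoc.prems)
  finally show ?case by (simp add: bicomm_equiv.trans)
qed

lemma normal_core_swap: "Mul (Var c) (rmul_vars (Mul (Var a) (Var b)) bs) \<approx> Mul (Var a) (rmul_vars (Mul (Var c) (Var b)) bs)"
proof (induction bs rule: rev_induct)
  case Nil then show ?case by (simp add: bicomm_equiv.left_comm)
next
  case (snoc y bs)
  have "Mul (Var c) (rmul_vars (Mul (Var a) (Var b)) (bs @ [y]))
      \<approx> Mul (Mul (Var c) (rmul_vars (Mul (Var a) (Var b)) bs)) (Var y)"
    by (simp, rule bicomm_equiv.sym, rule bicomm_equiv_assoc, rule is_Mul_rmul_vars, simp)
  also have "\<dots> \<approx> Mul (Mul (Var a) (rmul_vars (Mul (Var c) (Var b)) bs)) (Var y)" by (intro bicomm_equiv.cong_left snoc)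
  also have "\<dots> \<approx> Mul (Var a) (rmul_vars (Mul (Var c) (Var b)) (bs @ [y]))"
    by (simp, rule bicomm_equiv_assoc, rule is_Mul_rmul_vars, simp)
  finally show ?case by (simp add: bicomm_equiv.trans)
qed

lemma normal_mon_perm_right:
  assumes "mset (b # bs) = mset (b' # bs')"
  shows "normal_mon a as b bs \<approx> normal_mon a as b' bs'"
proof -
  have "rmul_vars (Mul (Var a) (Var b)) bs \<approx> rmul_vars (Mul (Var a) (Var b')) bs'"
  proof (cases "b = b'")
    case True
    then show ?thesis using assms by (simp add: rmul_vars_perm)
  next
    case False
    then have "b' \<in> set bs" using assms by (metis insert_iff list.set(2) set_mset_mset)
    then obtain ys zs where bs: "bs = ys @ b' # zs" by (meson split_list)
    have "rmul_vars (Mul (Var a) (Var b)) bs \<approx> rmul_vars (Mul (Var a) (Var b)) (b' # ys @ zs)"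
      unfolding bs by (rule rmul_vars_move)
    also have "\<dots> \<approx> rmul_vars (Mul (Var a) (Var b')) (b # ys @ zs)"
      by (simp add: rmul_vars_cong bicomm_equiv.right_comm)
    also have "\<dots> \<approx> rmul_vars (Mul (Var a) (Var b')) bs'"
      using assms bs by (intro rmul_vars_perm) (simp add: add_mset_commute)
    finally show ?thesis .
  qed
  then show ?thesis unfolding normal_mon_def by (rule lmul_vars_cong)
qed

lemma normal_mon_perm_left:
  assumes "mset (a # as) = mset (a' # as')"
  shows "normal_mon a as b bs \<approx> normal_mon a' as' b bs"
proof (cases "a = a'")
  case True
  then have "mset as = mset as'" using assms by simp
  then show ?thesis unfolding normal_mon_def True by (rule lmul_vars_perm)
next
  case False
  then have "a' \<in> set as" using assms by (metis insert_iff list.set(2) set_mset_mset)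
  then obtain ys zs where as: "as = ys @ a' # zs" by (meson split_list)
  let ?W = "rmul_vars (Mul (Var a) (Var b)) bs"
  have "lmul_vars as ?W \<approx> lmul_vars (a' # ys @ zs) ?W" unfolding as by (rule lmul_vars_move)
  also have "\<dots> = Mul (Var a') (lmul_vars (ys @ zs) ?W)" by simp
  also have "\<dots> \<approx> lmul_vars (ys @ zs) (Mul (Var a') ?W)" by (rule Mul_lmul_vars)
  also have "\<dots> \<approx> lmul_vars (ys @ zs) (Mul (Var a) (rmul_vars (Mul (Var a') (Var b)) bs))"
    by (intro lmul_vars_cong normal_core_swap)
  also have "\<dots> \<approx> Mul (Var a) (lmul_vars (ys @ zs) (rmul_vars (Mul (Var a') (Var b)) bs))"
    by (rule bicomm_equiv.sym, rule Mul_lmul_vars)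
  also have "\<dots> = lmul_vars (a # ys @ zs) (rmul_vars (Mul (Var a') (Var b)) bs)" by simp
  also have "\<dots> \<approx> lmul_vars as' (rmul_vars (Mul (Var a') (Var b)) bs)"
    using assms as by (intro lmul_vars_perm) (simp add: add_mset_commute)
  finally show ?thesis by (simp add: normal_mon_def)
qed

lemma normal_mon_perm:
  assumes "mset (a # as) = mset (a' # as')" "mset (b # bs) = mset (b' # bs')"
  shows "normal_mon a as b bs \<approx> normal_mon a' as' b' bs'"
  using normal_mon_perm_left[OF assms(1)] normal_mon_perm_right[OF assms(2)]
  by (rule bicomm_equiv.trans)

text \<open>The left variables of a monomial: for \<open>normal_mon a as b bs\<close> these are \<open>a # as\<close>
  (see \<open>lvars_normal_mon\<close>); \<open>lvars_factor t\<close> is the contribution of \<open>t\<close> when it occurs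
  as a left factor.\<close>

fun lvars :: "nmon \<Rightarrow> nat multiset" where
  "lvars (Var i) = {#}"
| "lvars (Mul a b) = (case a of Var i \<Rightarrow> {#i#} | Mul _ _ \<Rightarrow> lvars a) + lvars b"

definition lvars_factor :: "nmon \<Rightarrow> nat multiset" where
  "lvars_factor t = (case t of Var i \<Rightarrow> {#i#} | Mul _ _ \<Rightarrow> lvars t)"

abbreviation vars :: "nmon \<Rightarrow> nat multiset" where "vars t \<equiv> mset (leaves t)"

lemma lvars_factor_simps [simp]: "lvars_factor (Var i) = {#i#}" "lvars_factor (Mul a b) = lvars (Mul a b)"
  by (simp_all add: lvars_factor_def)

lemma lvars_Mul: "lvars (Mul a b) = lvars_factor a + lvars b"
  by (cases a) (simp_all add: lvars_factor_def)

declare lvars.simps(2)[simp del]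

lemma lvars_subset: "lvars t \<subseteq># vars t" and lvars_factor_subset: "lvars_factor t \<subseteq># vars t"
proof (induction t)
  case (Var x)
  { case 1 then show ?case by simp next case 2 then show ?case by simp }
next
  case (Mul t1 t2)
  { case 1 then show ?case using Mul by (simp add: lvars_Mul subset_mset.add_mono)
  next case 2 then show ?case using Mul by (simp add: lvars_Mul subset_mset.add_mono) }
qed

lemma lvars_factor_nonempty: "lvars_factor t \<noteq> {#}"
  by (induction t) (simp_all add: lvars_Mul)

lemma add_diff_add_mset: "C \<subseteq># A \<Longrightarrow> D \<subseteq># B \<Longrightarrow> (A + B) - (C + D) = (A - C) + (B - D)"
  by (auto simp: multiset_eq_iff subseteq_mset_def)

lemma rvars_nonempty: "is_Mul t \<Longrightarrow> vars t - lvars t \<noteq> {#}"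
proof (induction t)
  case (Var x) then show ?case by simp
next
  case (Mul a b)
  show ?case
  proof (cases b)
    case (Var j)
    have "vars (Mul a b) - lvars (Mul a b) = (vars a + {#j#}) - (lvars_factor a + {#})"
      by (simp add: lvars_Mul Var)
    also have "\<dots> = (vars a - lvars_factor a) + ({#j#} - {#})"
      by (rule add_diff_add_mset[OF lvars_factor_subset]) simp
    finally show ?thesis by simp
  next
    case (Mul x y)
    then have "is_Mul b" by simp
    have "vars (Mul a b) - lvars (Mul a b) = (vars a + vars b) - (lvars_factor a + lvars b)"
      by (simp add: lvars_Mul)
    also have "\<dots> = (vars a - lvars_factor a) + (vars b - lvars b)"
      by (rule add_diff_add_mset[OF lvars_factor_subset lvars_subset])
    finally show ?thesis using Mul.IH(2)[OF \<open>is_Mul b\<close>] by simp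
  qed
qed

lemma lvars_lmul_vars: "is_Mul W \<Longrightarrow> lvars (lmul_vars as W) = mset as + lvars W"
  by (induction as) (auto simp: lvars_Mul is_Mul_lmul_vars)
lemma lvars_rmul_vars: "is_Mul W \<Longrightarrow> lvars (rmul_vars W bs) = lvars W"
  by (induction bs arbitrary: W) (auto simp: lvars_Mul lvars_factor_def split: nmon.split)
lemma vars_lmul_vars: "vars (lmul_vars as W) = mset as + vars W"
  by (induction as) auto
lemma vars_rmul_vars: "vars (rmul_vars W bs) = vars W + mset bs"
  by (induction bs arbitrary: W) auto

lemma lvars_normal_mon: "lvars (normal_mon a as b bs) = mset (a # as)"
  by (simp add: normal_mon_def lvars_lmul_vars is_Mul_rmul_vars lvars_rmul_vars lvars_Mul)
lemma vars_normal_mon: "vars (normal_mon a as b bs) = mset (a # as) + mset (b # bs)"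
  by (simp add: normal_mon_def vars_lmul_vars vars_rmul_vars)
lemma normal_mon_Mul_Var: "Mul (normal_mon a as b bs) (Var j) \<approx> normal_mon a as b (bs @ [j])"
  unfolding normal_mon_def by (simp, rule lmul_vars_Mul, rule is_Mul_rmul_vars, simp)

lemma Mul_normal_mon:
  "Mul (normal_mon a1 as1 b1 bs1) (normal_mon a2 as2 b2 bs2)
     \<approx> normal_mon a1 (as2 @ a2 # as1) b1 (bs1 @ b2 # bs2)"
proof -
  let ?N1 = "normal_mon a1 as1 b1 bs1"
  have "Mul ?N1 (normal_mon a2 as2 b2 bs2)
      \<approx> lmul_vars as2 (Mul ?N1 (rmul_vars (Mul (Var a2) (Var b2)) bs2))"
    unfolding normal_mon_def[of a2] by (rule Mul_lmul_vars)
  also have "\<dots> \<approx> lmul_vars as2 (rmul_vars (Mul ?N1 (Mul (Var a2) (Var b2))) bs2)"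
    by (intro lmul_vars_cong Mul_rmul_vars) simp
  also have "\<dots> \<approx> lmul_vars as2 (rmul_vars (Mul (Var a2) (Mul ?N1 (Var b2))) bs2)"
    by (intro lmul_vars_cong rmul_vars_cong bicomm_equiv.left_comm)
  also have "\<dots> \<approx> lmul_vars as2 (rmul_vars (Mul (Var a2) (normal_mon a1 as1 b1 (bs1 @ [b2]))) bs2)"
    by (intro lmul_vars_cong rmul_vars_cong bicomm_equiv.cong_right normal_mon_Mul_Var)
  also have "\<dots> = lmul_vars as2
      (rmul_vars (lmul_vars (a2 # as1) (rmul_vars (Mul (Var a1) (Var b1)) (bs1 @ [b2]))) bs2)"
    by (simp add: normal_mon_def)
  also have "\<dots> \<approx> lmul_vars as2
      (lmul_vars (a2 # as1) (rmul_vars (rmul_vars (Mul (Var a1) (Var b1)) (bs1 @ [b2])) bs2))"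
    by (intro lmul_vars_cong rmul_vars_lmul_vars is_Mul_rmul_vars) simp
  also have "\<dots> = normal_mon a1 (as2 @ a2 # as1) b1 (bs1 @ b2 # bs2)"
    by (simp add: normal_mon_def del: lmul_vars_simps(2) rmul_vars_simps(4))
  finally show ?thesis .
qed

lemma normal_mon_exists: "is_Mul t \<Longrightarrow> \<exists>a as b bs. t \<approx> normal_mon a as b bs"
proof (induction t)
  case (Var x) then show ?case by simp
next
  case (Mul x y)
  show ?case
  proof (cases x; cases y)
    fix i j assume "x = Var i" "y = Var j"
    then have "Mul x y = normal_mon i [] j []" by (simp add: normal_mon_def)
    then show ?thesis by (metis bicomm_equiv.refl)
  next
    fix i y1 y2 assume x: "x = Var i" and "y = Mul y1 y2"
    then obtain a as b bs where "y \<approx> normal_mon a as b bs" using Mul.IH(2) by auto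
    then have "Mul x y \<approx> Mul (Var i) (normal_mon a as b bs)" by (simp add: x bicomm_equiv.cong_right)
    also have "\<dots> = normal_mon a (i # as) b bs" by (simp add: normal_mon_def)
    finally show ?thesis by blast
  next
    fix x1 x2 j assume "x = Mul x1 x2" and y: "y = Var j"
    then obtain a as b bs where "x \<approx> normal_mon a as b bs" using Mul.IH(1) by auto
    then have "Mul x y \<approx> Mul (normal_mon a as b bs) (Var j)" by (simp add: y bicomm_equiv.cong_left)
    also have "\<dots> \<approx> normal_mon a as b (bs @ [j])" by (rule normal_mon_Mul_Var)
    finally show ?thesis by blast
  next
    fix x1 x2 y1 y2 assume "x = Mul x1 x2" "y = Mul y1 y2"
    then obtain a1 as1 b1 bs1 a2 as2 b2 bs2 where
      "x \<approx> normal_mon a1 as1 b1 bs1" "y \<approx> normal_mon a2 as2 b2 bs2"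
      using Mul.IH by fastforce
    then have "Mul x y \<approx> Mul (normal_mon a1 as1 b1 bs1) (normal_mon a2 as2 b2 bs2)"
      by (meson bicomm_equiv.cong_left bicomm_equiv.cong_right bicomm_equiv.trans)
    also have "\<dots> \<approx> normal_mon a1 (as2 @ a2 # as1) b1 (bs1 @ b2 # bs2)" by (rule Mul_normal_mon)
    finally show ?thesis by blast
  qed
qed

lemma length_leaves_ge_1: "length (leaves t) \<ge> 1"
  by (induction t) auto

lemma size_vars_ge_2: "is_Mul t \<Longrightarrow> size (vars t) \<ge> 2"
proof (cases t)
  case (Mul a b) then show ?thesis using length_leaves_ge_1[of a] length_leaves_ge_1[of b] by simp
qed simp

lemma is_Mul_vars: "vars t = vars u \<Longrightarrow> is_Mul t \<Longrightarrow> is_Mul u"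
  by (cases u) (use size_vars_ge_2[of t] in auto)

lemma bicomm_equiv_invariants: "t \<approx> u \<Longrightarrow> vars t = vars u \<and> lvars t = lvars u \<and> is_Mul t = is_Mul u"
proof (induction rule: bicomm_equiv.induct)
  case (cong_left t u v)
  have h: "vars t = vars u" "lvars t = lvars u" "is_Mul t = is_Mul u" using cong_left.IH by auto
  have "lvars_factor t = lvars_factor u"
  proof (cases t)
    case (Var i)
    then obtain j where u: "u = Var j" using h(3) by (cases u) auto
    then show ?thesis using h(1) Var by simp
  next
    case (Mul a b)
    then obtain c d where u: "u = Mul c d" using h(3) by (cases u) auto
    then show ?thesis using h(2) Mul by (simp only: lvars_factor_simps)
  qed
  then show ?case using h by (simp add: lvars_Mul)
next
  case (cong_right t u v)
  have h: "vars t = vars u" "lvars t = lvars u" "is_Mul t = is_Mul u" using cong_right.IH by auto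
  then show ?case by (simp add: lvars_Mul)
next
  case (refl t) show ?case by simp
next
  case (sym t u) then show ?case by metis
next
  case (trans t u v) then show ?case by metis
next
  case (right_comm p q r) show ?case by (simp add: lvars_Mul ac_simps)
next
  case (left_comm p q r) show ?case by (simp add: lvars_Mul ac_simps)
qed

lemma bicomm_equiv_if_vars_lvars:
  assumes "vars t = vars u" "lvars t = lvars u"
  shows "t \<approx> u"
proof (cases "is_Mul t")
  case True
  then have "is_Mul u" using is_Mul_vars assms by blast
  obtain a as b bs where t: "t \<approx> normal_mon a as b bs" using normal_mon_exists True by blast
  obtain a' as' b' bs' where u: "u \<approx> normal_mon a' as' b' bs'" using normal_mon_exists \<open>is_Mul u\<close> by blast
  have st: "vars t = vars (normal_mon a as b bs)" "lvars t = lvars (normal_mon a as b bs)"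
    and su: "vars u = vars (normal_mon a' as' b' bs')" "lvars u = lvars (normal_mon a' as' b' bs')"
    using bicomm_equiv_invariants[OF t] bicomm_equiv_invariants[OF u] by auto
  have "normal_mon a as b bs \<approx> normal_mon a' as' b' bs'"
  proof (rule normal_mon_perm)
    show *: "mset (a # as) = mset (a' # as')" using st su assms by (simp only: lvars_normal_mon)
    have "vars (normal_mon a as b bs) = vars (normal_mon a' as' b' bs')" using st su assms by simp
    then have "mset (a # as) + mset (b # bs) = mset (a' # as') + mset (b' # bs')" by (simp only: vars_normal_mon)
    then show "mset (b # bs) = mset (b' # bs')" using * by (simp only: add_left_cancel)
  qed
  then show ?thesis using t u by (meson bicomm_equiv.sym bicomm_equiv.trans)
next
  case False
  then obtain i where "t = Var i" by (cases t) auto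
  then have "u = Var i" using assms(1) is_Mul_vars[of u t] by (cases u) auto
  then show ?thesis using \<open>t = Var i\<close> by (simp add: bicomm_equiv.refl)
qed

section \<open>Multihomogeneous components\<close>

lemma sum_triangle_swap:
  "(\<Sum>e\<le>n. \<Sum>j<e. f j e) = (\<Sum>j<n. \<Sum>e\<in>{Suc j..n}. f j e)" for f :: "nat \<Rightarrow> nat \<Rightarrow> 'a::comm_monoid_add"
proof (induction n)
  case 0 then show ?case by simp
next
  case (Suc n)
  have "(\<Sum>j<Suc n. \<Sum>e\<in>{Suc j..Suc n}. f j e) = (\<Sum>j<Suc n. (\<Sum>e\<in>{Suc j..n}. f j e) + f j (Suc n))"
    by (rule sum.cong[OF HOL.refl], subst sum.cl_ivl_Suc, auto)
  also have "\<dots> = (\<Sum>j<n. \<Sum>e\<in>{Suc j..n}. f j e) + (\<Sum>j<Suc n. f j (Suc n))"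
    by (simp add: sum.distrib)
  finally show ?case using Suc by simp
qed

lemma sum_power_diff_binomial:
  fixes c :: "'k::field_char_0" and a :: "nat \<Rightarrow> 'k"
  shows "(\<Sum>e\<le>n. ((c + 1)^e - c^e) * a e) =
         (\<Sum>j<n. c^j * (\<Sum>e\<in>{Suc j..n}. of_nat (e choose j) * a e))"
proof -
  have "(c + 1)^e - c^e = (\<Sum>j<e. of_nat (e choose j) * c^j)" for e
  proof -
    have "(c + 1)^e = (\<Sum>j\<le>e. of_nat (e choose j) * c^j)"
      by (simp add: binomial_ring mult.commute)
    also have "\<dots> = (\<Sum>j<e. of_nat (e choose j) * c^j) + c^e"
      by (simp add: lessThan_Suc_atMost[symmetric])
    finally show ?thesis by simp
  qed
  then have "(\<Sum>e\<le>n. ((c + 1)^e - c^e) * a e) = (\<Sum>e\<le>n. \<Sum>j<e. of_nat (e choose j) * c^j * a e)"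
    by (simp add: sum_distrib_right)
  also have "\<dots> = (\<Sum>j<n. \<Sum>e\<in>{Suc j..n}. of_nat (e choose j) * c^j * a e)"
    by (rule sum_triangle_swap)
  also have "\<dots> = (\<Sum>j<n. c^j * (\<Sum>e\<in>{Suc j..n}. of_nat (e choose j) * a e))"
    by (simp add: sum_distrib_left ac_simps)
  finally show ?thesis .
qed

text \<open>Finite differences in \<open>c\<close> invert the Vandermonde system; this is where
  characteristic \<open>0\<close> is needed.\<close>

lemma components_in_T_ideal:
  fixes v :: "nat \<Rightarrow> 'k::field_char_0 nalg"
  assumes TI: "T_ideal I"
  assumes "\<And>c::nat. (\<Sum>e\<le>m. smult_na ((of_nat c)^e) (v e)) \<in> I"
  shows "e \<le> m \<Longrightarrow> v e \<in> I"
  using assms(2)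
proof (induction m arbitrary: v e)
  case 0 then show ?case by simp
next
  case (Suc m)
  interpret tideal I by unfold_locales (rule TI)
  define w where "w c = (\<Sum>e\<le>Suc m. smult_na ((of_nat c)^e) (v e))" for c :: nat
  define v' where "v' j = (\<Sum>e\<in>{Suc j..Suc m}. smult_na (of_nat (e choose j)) (v e))" for j
  have lw: "Poly_Mapping.lookup (w c) t = (\<Sum>e\<le>Suc m. (of_nat c)^e * Poly_Mapping.lookup (v e) t)" for c t
    by (simp add: w_def lookup_sum del: sum.atMost_Suc)
  have wdiff: "w (Suc c) - w c = (\<Sum>j\<le>m. smult_na ((of_nat c)^j) (v' j))" for c
  proof (rule poly_mapping_eqI)
    fix t
    have "Poly_Mapping.lookup (w (Suc c) - w c) t =
        (\<Sum>e\<le>Suc m. ((of_nat c + 1)^e - (of_nat c)^e) * Poly_Mapping.lookup (v e) t)"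
      unfolding lookup_minus lw by (simp only: of_nat_Suc left_diff_distrib sum_subtractf add.commute)
    also have "\<dots> = (\<Sum>j<Suc m. (of_nat c)^j * (\<Sum>e\<in>{Suc j..Suc m}. of_nat (e choose j) * Poly_Mapping.lookup (v e) t))"
      by (rule sum_power_diff_binomial)
    also have "\<dots> = Poly_Mapping.lookup (\<Sum>j\<le>m. smult_na ((of_nat c)^j) (v' j)) t"
      by (simp add: v'_def lookup_sum lookup_add lessThan_Suc_atMost)
    finally show "Poly_Mapping.lookup (w (Suc c) - w c) t = Poly_Mapping.lookup (\<Sum>j\<le>m. smult_na ((of_nat c)^j) (v' j)) t" .
  qed
  have wI: "w c \<in> I" for c using Suc.prems(2) by (simp add: w_def)
  have "(\<Sum>j\<le>m. smult_na ((of_nat c)^j) (v' j)) \<in> I" for c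
  proof -
    have "w (Suc c) - w c \<in> I" by (rule local.diff[OF wI wI])
    then show ?thesis by (simp only: wdiff)
  qed
  then have "v' m \<in> I" using Suc.IH[of m v'] by auto
  moreover have "v' m = smult_na (of_nat (Suc m)) (v (Suc m))"
    by (simp add: v'_def del: of_nat_Suc)
  ultimately have top: "v (Suc m) \<in> I" using smult_iff[of "of_nat (Suc m)" "v (Suc m)"] by (simp del: of_nat_Suc)
  have "(\<Sum>e\<le>m. smult_na ((of_nat c)^e) (v e)) = w c - smult_na ((of_nat c)^(Suc m)) (v (Suc m))" for c
    by (simp add: w_def)
  then have "(\<Sum>e\<le>m. smult_na ((of_nat c)^e) (v e)) \<in> I" for c
    using wI top by (simp add: local.diff smult)
  then show ?case using Suc.IH top Suc.prems(1) by (cases "e = Suc m") auto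
qed

definition deg_in :: "nat \<Rightarrow> nmon \<Rightarrow> nat" where "deg_in j t = count (vars t) j"

definition hom_part :: "nat \<Rightarrow> nat \<Rightarrow> 'k::field nalg \<Rightarrow> 'k nalg" where
  "hom_part j e p = (\<Sum>t\<in>{t\<in>Poly_Mapping.keys p. deg_in j t = e}. smult_na (Poly_Mapping.lookup p t) (mon t))"

lemma lookup_hom_part: "Poly_Mapping.lookup (hom_part j e p) u = (if deg_in j u = e then Poly_Mapping.lookup p u else 0)"
proof -
  have "Poly_Mapping.lookup (hom_part j e p) u =
      (\<Sum>t\<in>{t\<in>Poly_Mapping.keys p. deg_in j t = e}. if t = u then Poly_Mapping.lookup p t else 0)"
    unfolding hom_part_def lookup_sum by (intro sum.cong) (auto simp: lookup_mon)
  also have "\<dots> = (if deg_in j u = e then Poly_Mapping.lookup p u else 0)"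
    by (auto simp: sum.delta in_keys_iff)
  finally show ?thesis .
qed

lemma keys_hom_part: "t \<in> Poly_Mapping.keys (hom_part j e p) \<Longrightarrow> t \<in> Poly_Mapping.keys p \<and> deg_in j t = e"
  by (auto simp: in_keys_iff lookup_hom_part split: if_splits)

lemma hom_part_add: "hom_part j e (p + q) = hom_part j e p + hom_part j e q"
  by (rule poly_mapping_eqI) (simp add: lookup_hom_part lookup_add)
lemma hom_part_smult: "hom_part j e (smult_na c p) = smult_na c (hom_part j e p)"
  by (rule poly_mapping_eqI) (simp add: lookup_hom_part)
lemma hom_part_zero [simp]: "hom_part j e 0 = 0"
  by (rule poly_mapping_eqI) (simp add: lookup_hom_part)
lemma hom_part_sum: "hom_part j e (sum f A) = (\<Sum>x\<in>A. hom_part j e (f x))"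
  by (induction A rule: infinite_finite_induct) (simp_all add: hom_part_add)

lemma hom_part_decomp:
  assumes "\<forall>t\<in>Poly_Mapping.keys p. deg_in j t \<le> M"
  shows "p = (\<Sum>e\<le>M. hom_part j e p)"
proof (rule poly_mapping_eqI)
  fix u
  have "Poly_Mapping.lookup (\<Sum>e\<le>M. hom_part j e p) u = (\<Sum>e\<le>M. if deg_in j u = e then Poly_Mapping.lookup p u else 0)"
    by (simp add: lookup_sum lookup_hom_part)
  also have "\<dots> = Poly_Mapping.lookup p u"
    using assms by (auto simp: sum.delta in_keys_iff)
  finally show "Poly_Mapping.lookup p u = Poly_Mapping.lookup (\<Sum>e\<le>M. hom_part j e p) u" by simp
qed

lemma deg_in_Mul [simp]: "deg_in j (Mul a b) = deg_in j a + deg_in j b"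
  by (simp add: deg_in_def)
lemma deg_in_Var [simp]: "deg_in j (Var i) = (if i = j then 1 else 0)"
  by (simp add: deg_in_def)

definition scale_var :: "nat \<Rightarrow> 'k::field \<Rightarrow> nat \<Rightarrow> 'k nalg" where
  "scale_var j c = (\<lambda>i. if i = j then smult_na c (mon (Var i)) else mon (Var i))"

lemma subst_mon_scale_var: "subst_mon (scale_var j c) t = smult_na (c ^ deg_in j t) (mon t)"
  by (induction t) (simp_all add: scale_var_def mul_na_smult_left mul_na_smult_right mul_na_mon power_add mult.commute)

lemma lookup_subst_na: "Poly_Mapping.lookup (subst_na s p) u =
   (\<Sum>t\<in>Poly_Mapping.keys p. Poly_Mapping.lookup p t * Poly_Mapping.lookup (subst_mon s t) u)"
  by (simp add: subst_na_def lookup_sum)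

lemma subst_na_scale_var:
  assumes "\<forall>t\<in>Poly_Mapping.keys p. deg_in j t \<le> M"
  shows "subst_na (scale_var j c) p = (\<Sum>e\<le>M. smult_na (c^e) (hom_part j e p))"
proof (rule poly_mapping_eqI)
  fix u
  have "Poly_Mapping.lookup (subst_na (scale_var j c) p) u =
      (\<Sum>t\<in>Poly_Mapping.keys p. if t = u then Poly_Mapping.lookup p t * c ^ deg_in j t else 0)"
    unfolding lookup_subst_na subst_mon_scale_var by (intro sum.cong) (auto simp: lookup_mon)
  also have "\<dots> = Poly_Mapping.lookup p u * c ^ deg_in j u"
    by (auto simp: sum.delta in_keys_iff)
  also have "\<dots> = (\<Sum>e\<le>M. if e = deg_in j u then c^e * Poly_Mapping.lookup p u else 0)"
  proof (cases "u \<in> Poly_Mapping.keys p")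
    case True
    then have "deg_in j u \<in> {..M}" using assms by auto
    then show ?thesis by (simp add: sum.delta mult.commute)
  next
    case False then show ?thesis by (simp add: in_keys_iff)
  qed
  also have "\<dots> = (\<Sum>e\<le>M. c^e * (if deg_in j u = e then Poly_Mapping.lookup p u else 0))"
    by (intro sum.cong) auto
  finally show "Poly_Mapping.lookup (subst_na (scale_var j c) p) u =
      Poly_Mapping.lookup (\<Sum>e\<le>M. smult_na (c^e) (hom_part j e p)) u"
    by (simp add: lookup_sum lookup_hom_part)
qed

lemma hom_part_in_T_ideal:
  fixes p :: "'k::field_char_0 nalg"
  assumes TI: "T_ideal I" and p: "p \<in> I"
  shows "hom_part j e p \<in> I"
proof -
  interpret tideal I by unfold_locales (rule TI)
  define M where "M = Max (insert 0 (deg_in j ` Poly_Mapping.keys p))"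
  have M: "\<forall>t\<in>Poly_Mapping.keys p. deg_in j t \<le> M" unfolding M_def by auto
  show ?thesis
  proof (cases "e \<le> M")
    case True
    have "(\<Sum>e\<le>M. smult_na ((of_nat c)^e) (hom_part j e p)) \<in> I" for c :: nat
      using subst[OF p, of "scale_var j (of_nat c)"] subst_na_scale_var[OF M] by simp
    from components_in_T_ideal[OF TI this True] show ?thesis .
  next
    case False
    have "hom_part j e p = 0"
      by (rule poly_mapping_eqI) (use M False in \<open>auto simp: lookup_hom_part in_keys_iff\<close>)
    then show ?thesis by (simp add: zero)
  qed
qed

lemma multihomogeneous_in:
  fixes p :: "'k::field_char_0 nalg"
  assumes TI: "T_ideal TV" and p: "p \<in> TV" "p \<notin> T_B" and J: "finite J"
  shows "\<exists>q. q \<in> TV \<and> q \<notin> T_B \<and> Poly_Mapping.keys q \<subseteq> Poly_Mapping.keys p \<and>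
     (\<forall>j\<in>J. \<forall>t\<in>Poly_Mapping.keys q. \<forall>u\<in>Poly_Mapping.keys q. deg_in j t = deg_in j u)"
  using J
proof (induction J rule: finite_induct)
  case empty then show ?case using p by blast
next
  case (insert j J)
  then obtain q where q: "q \<in> TV" "q \<notin> T_B" "Poly_Mapping.keys q \<subseteq> Poly_Mapping.keys p"
    "\<forall>j\<in>J. \<forall>t\<in>Poly_Mapping.keys q. \<forall>u\<in>Poly_Mapping.keys q. deg_in j t = deg_in j u" by blast
  define M where "M = Max (insert 0 (deg_in j ` Poly_Mapping.keys q))"
  have M: "\<forall>t\<in>Poly_Mapping.keys q. deg_in j t \<le> M" unfolding M_def by auto
  have "\<exists>e\<le>M. hom_part j e q \<notin> T_B"
  proof (rule ccontr)
    assume "\<not> ?thesis"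
    then have "(\<Sum>e\<le>M. hom_part j e q) \<in> T_B" by (auto intro: TB.sum)
    then show False using hom_part_decomp[OF M] q(2) by simp
  qed
  then obtain e where e: "hom_part j e q \<notin> T_B" by blast
  show ?case
  proof (intro exI conjI)
    show "hom_part j e q \<in> TV" by (rule hom_part_in_T_ideal[OF TI q(1)])
    show "hom_part j e q \<notin> T_B" by (rule e)
    show "Poly_Mapping.keys (hom_part j e q) \<subseteq> Poly_Mapping.keys p" using q(3) keys_hom_part by blast
    show "\<forall>i\<in>insert j J. \<forall>t\<in>Poly_Mapping.keys (hom_part j e q).
        \<forall>u\<in>Poly_Mapping.keys (hom_part j e q). deg_in i t = deg_in i u"
    proof (intro ballI)
      fix i t u assume i: "i \<in> insert j J" and t: "t \<in> Poly_Mapping.keys (hom_part j e q)"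
        and u: "u \<in> Poly_Mapping.keys (hom_part j e q)"
      from keys_hom_part[OF t] keys_hom_part[OF u] have "t \<in> Poly_Mapping.keys q" "u \<in> Poly_Mapping.keys q"
        "deg_in j t = e" "deg_in j u = e" by auto
      then show "deg_in i t = deg_in i u" using i q(4) by auto
    qed
  qed
qed

lemma multihomogeneous_identity:
  fixes p :: "'k::field_char_0 nalg"
  assumes TI: "T_ideal TV" and p: "p \<in> TV" "p \<notin> T_B"
  shows "\<exists>q. q \<in> TV \<and> q \<notin> T_B \<and> Poly_Mapping.keys q \<subseteq> Poly_Mapping.keys p \<and>
     (\<forall>t\<in>Poly_Mapping.keys q. \<forall>u\<in>Poly_Mapping.keys q. vars t = vars u)"
proof -
  define J where "J = (\<Union>t\<in>Poly_Mapping.keys p. set (leaves t))"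
  have "finite J" unfolding J_def by auto
  from multihomogeneous_in[OF TI p this] obtain q where q: "q \<in> TV" "q \<notin> T_B" "Poly_Mapping.keys q \<subseteq> Poly_Mapping.keys p"
    "\<forall>j\<in>J. \<forall>t\<in>Poly_Mapping.keys q. \<forall>u\<in>Poly_Mapping.keys q. deg_in j t = deg_in j u" by blast
  have "vars t = vars u" if "t \<in> Poly_Mapping.keys q" "u \<in> Poly_Mapping.keys q" for t u
  proof (rule multiset_eqI)
    fix x
    show "count (vars t) x = count (vars u) x"
    proof (cases "x \<in> J")
      case True
      have "deg_in x t = deg_in x u" using q(4) True that by blast
      then show ?thesis by (simp only: deg_in_def)
    next
      case False
      then have "x \<notin> set (leaves t)" "x \<notin> set (leaves u)" using that q(3) by (auto simp: J_def)
      then have "count (vars t) x = 0" "count (vars u) x = 0"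
        by (metis count_eq_zero_iff set_mset_mset)+
      then show ?thesis by (simp only:)
    qed
  qed
  then show ?thesis using q by blast
qed

section \<open>Linearization\<close>

lemma hom_part_0_mul: "hom_part N 0 (mul_na p q) = mul_na (hom_part N 0 p) (hom_part N 0 q)"
  by (rule poly_mapping_eqI) (simp add: lookup_hom_part lookup_mul_na split: nmon.split)

lemma hom_part_1_mul:
  "hom_part N (Suc 0) (mul_na p q) =
     mul_na (hom_part N (Suc 0) p) (hom_part N 0 q) + mul_na (hom_part N 0 p) (hom_part N (Suc 0) q)"
proof (rule poly_mapping_eqI)
  fix u
  show "Poly_Mapping.lookup (hom_part N (Suc 0) (mul_na p q)) u =
    Poly_Mapping.lookup (mul_na (hom_part N (Suc 0) p) (hom_part N 0 q) + mul_na (hom_part N 0 p) (hom_part N (Suc 0) q)) u"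
  proof (cases u)
    case (Var i) then show ?thesis by (simp add: lookup_hom_part lookup_mul_na lookup_add)
  next
    case (Mul a b)
    then show ?thesis
      by (auto simp: lookup_hom_part lookup_mul_na lookup_add add_is_1)
  qed
qed

definition add_var_subst :: "nat \<Rightarrow> nat \<Rightarrow> nat \<Rightarrow> 'k::field nalg" where
  "add_var_subst j N = (\<lambda>i. if i = j then mon (Var j) + mon (Var N) else mon (Var i))"

definition rename_var_subst :: "nat \<Rightarrow> nat \<Rightarrow> nat \<Rightarrow> 'k::field nalg" where
  "rename_var_subst N j = (\<lambda>i. if i = N then mon (Var j) else mon (Var i))"

fun polarize :: "nat \<Rightarrow> nat \<Rightarrow> nmon \<Rightarrow> 'k::field nalg" where
  "polarize j N (Var i) = (if i = j then mon (Var N) else 0)"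
| "polarize j N (Mul a b) = mul_na (polarize j N a) (mon b) + mul_na (mon a) (polarize j N b)"

lemma hom_part_mon: "hom_part N e (mon t) = (if deg_in N t = e then mon t else 0)"
  by (rule poly_mapping_eqI) (simp add: lookup_hom_part lookup_mon)

lemma hom_part_add_var_subst:
  assumes "N \<notin># vars t" "j \<noteq> N"
  shows "hom_part N 0 (subst_mon (add_var_subst j N) t) = (mon t :: 'k::field nalg) \<and>
         hom_part N (Suc 0) (subst_mon (add_var_subst j N) t) = (polarize j N t :: 'k nalg)"
  using assms
proof (induction t)
  case (Var i)
  then show ?case by (simp add: add_var_subst_def hom_part_add hom_part_mon)
next
  case (Mul a b)
  then show ?case by (simp add: hom_part_0_mul hom_part_1_mul mul_na_mon)
qed

lemma subst_mon_rename_var: "N \<notin># vars t \<Longrightarrow> subst_mon (rename_var_subst N j) t = (mon t :: 'k::field nalg)"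
  by (induction t) (auto simp: rename_var_subst_def mul_na_mon)

lemma subst_rename_var_polarize:
  assumes "N \<notin># vars t"
  shows "subst_na (rename_var_subst N j) (polarize j N t) = smult_na (of_nat (deg_in j t)) (mon t :: 'k::field nalg)"
  using assms
proof (induction t)
  case (Var i) then show ?case by (auto simp: rename_var_subst_def)
next
  case (Mul a b)
  then show ?case
    by (simp add: subst_na_add subst_na_mul subst_mon_rename_var mul_na_smult_left mul_na_smult_right
        mul_na_mon smult_na_add_left)
qed

lemma keys_polarize:
  "u \<in> Poly_Mapping.keys (polarize j N t :: 'k::field nalg) \<Longrightarrow>
     j \<in># vars t \<and> vars u = vars t - {#j#} + {#N#}"
proof (induction t arbitrary: u)
  case (Var i) then show ?case by (auto simp: mon_def split: if_splits)
next
  case (Mul a b)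
  then consider "u \<in> Poly_Mapping.keys (mul_na (polarize j N a :: 'k nalg) (mon b))"
    | "u \<in> Poly_Mapping.keys (mul_na (mon a) (polarize j N b :: 'k nalg))"
    using keys_add by fastforce
  then show ?case
  proof cases
    case 1
    then obtain a' b' where u: "u = Mul a' b'" "a' \<in> Poly_Mapping.keys (polarize j N a :: 'k nalg)"
      "b' \<in> Poly_Mapping.keys (mon b :: 'k nalg)" using keys_mul_na by blast
    then have "b' = b" by (simp add: mon_def)
    from Mul.IH(1)[OF u(2)] show ?thesis using u \<open>b' = b\<close>
      by (auto simp: multiset_eq_iff)
  next
    case 2
    then obtain a' b' where u: "u = Mul a' b'" "a' \<in> Poly_Mapping.keys (mon a :: 'k nalg)"
      "b' \<in> Poly_Mapping.keys (polarize j N b :: 'k nalg)" using keys_mul_na by blast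
    then have "a' = a" by (simp add: mon_def)
    from Mul.IH(2)[OF u(3)] show ?thesis using u \<open>a' = a\<close>
      by (auto simp: multiset_eq_iff)
  qed
qed

definition polarization :: "nat \<Rightarrow> nat \<Rightarrow> 'k::field nalg \<Rightarrow> 'k nalg" where
  "polarization j N q =
     (\<Sum>t\<in>Poly_Mapping.keys q. smult_na (Poly_Mapping.lookup q t) (polarize j N t))"

lemma hom_part_subst_add_var:
  assumes "\<forall>t\<in>Poly_Mapping.keys q. N \<notin># vars t" "j \<noteq> N"
  shows "hom_part N (Suc 0) (subst_na (add_var_subst j N) q) = polarization j N q"
proof -
  have "hom_part N (Suc 0) (subst_na (add_var_subst j N) q) =
      (\<Sum>t\<in>Poly_Mapping.keys q. smult_na (Poly_Mapping.lookup q t)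
         (hom_part N (Suc 0) (subst_mon (add_var_subst j N) t)))"
    by (simp add: subst_na_def hom_part_sum hom_part_smult)
  also have "\<dots> = polarization j N q"
    unfolding polarization_def using assms hom_part_add_var_subst by (intro sum.cong) auto
  finally show ?thesis .
qed

lemma subst_rename_var_polarization:
  assumes "\<forall>t\<in>Poly_Mapping.keys q. vars t = M" "N \<notin># M"
  shows "subst_na (rename_var_subst N j) (polarization j N q) = smult_na (of_nat (count M j)) q"
proof -
  have "subst_na (rename_var_subst N j) (polarization j N q) =
      (\<Sum>t\<in>Poly_Mapping.keys q. smult_na (Poly_Mapping.lookup q t) (smult_na (of_nat (deg_in j t)) (mon t)))"
    unfolding polarization_def subst_na_sum subst_na_smult
    by (intro sum.cong refl) (use assms in \<open>auto simp: subst_rename_var_polarize\<close>)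
  also have "\<dots> = smult_na (of_nat (count M j))
      (\<Sum>t\<in>Poly_Mapping.keys q. smult_na (Poly_Mapping.lookup q t) (mon t))"
    unfolding smult_na_sum using assms(1) by (intro sum.cong) (auto simp: deg_in_def mult.commute)
  finally show ?thesis by (simp add: nalg_expansion[symmetric])
qed

lemma keys_polarization:
  fixes q :: "'k::field nalg"
  assumes "u \<in> Poly_Mapping.keys (polarization j N q)"
  shows "\<exists>t\<in>Poly_Mapping.keys q. vars u = vars t - {#j#} + {#N#}"
proof -
  obtain t where t: "t \<in> Poly_Mapping.keys q"
    "u \<in> Poly_Mapping.keys (smult_na (Poly_Mapping.lookup q t) (polarize j N t))"
    using subsetD[OF keys_sum assms[unfolded polarization_def]] by blast
  then have "u \<in> Poly_Mapping.keys (polarize j N t :: 'k nalg)" by (simp add: in_keys_iff)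
  with t(1) keys_polarize show ?thesis by blast
qed

lemma in_mset_if_count_ge_2: "count M j \<ge> 2 \<Longrightarrow> j \<in># M"
  using count_greater_zero_iff[of M j] by linarith

lemma set_mset_diff_single:
  "count M j \<ge> 2 \<Longrightarrow> set_mset (M - {#j#}) = set_mset M"
  by (auto simp: in_diff_count not_in_iff in_mset_if_count_ge_2 split: if_splits)

lemma card_set_mset_le_size: "card (set_mset M) \<le> size M"
proof (induction M)
  case (add x M)
  have "card (set_mset (add_mset x M)) \<le> Suc (card (set_mset M))"
    by (simp add: card_insert_le_m1 card_insert_if)
  then show ?case using add by simp
qed simp

lemma card_set_mset_less_size:
  assumes "count M j \<ge> 2"
  shows "card (set_mset M) < size M"
proof -
  have "card (set_mset M) = card (set_mset (M - {#j#}))" using set_mset_diff_single[OF assms] by simp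
  also have "\<dots> \<le> size (M - {#j#})" by (rule card_set_mset_le_size)
  also have "\<dots> < size M" using assms by (intro size_Diff1_less in_mset_if_count_ge_2)
  finally show ?thesis .
qed

text \<open>Each polarization step turns an identity of multidegree \<open>M\<close> with a repeated variable
  \<open>x\<^sub>j\<close> into one of multidegree \<open>M - {#j#} + {#N#}\<close>; it stays outside \<open>T(B)\<close> because
  renaming \<open>x\<^sub>N\<close> back gives a nonzero multiple of the old identity.\<close>

lemma linearization_step:
  fixes q :: "'k::field_char_0 nalg"
  assumes TI: "T_ideal TV" and q: "q \<in> TV" "q \<notin> T_B"
    and keys: "\<forall>t\<in>Poly_Mapping.keys q. vars t = M"
    and cj: "count M j \<ge> 2" and N: "N \<notin># M"
  shows "\<exists>q1. q1 \<in> TV \<and> q1 \<notin> T_B \<and> (\<forall>t\<in>Poly_Mapping.keys q1. vars t = M - {#j#} + {#N#})"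
proof (intro exI conjI)
  interpret tideal TV by unfold_locales (rule TI)
  have "j \<noteq> N" using cj N by (auto simp: not_in_iff)
  then have q1_eq: "hom_part N (Suc 0) (subst_na (add_var_subst j N) q) = polarization j N q"
    using keys N by (intro hom_part_subst_add_var) auto
  show "polarization j N q \<in> TV"
    unfolding q1_eq[symmetric] by (intro hom_part_in_T_ideal TI subst q(1))
  show "polarization j N q \<notin> T_B"
  proof
    assume "polarization j N q \<in> T_B"
    then have "smult_na (of_nat (count M j)) q \<in> T_B"
      using TB.subst[of _ "rename_var_subst N j"] subst_rename_var_polarization[OF keys N] by metis
    then show False using TB.smult_iff[of "of_nat (count M j)" q] cj q(2) by simp
  qed
  show "\<forall>u\<in>Poly_Mapping.keys (polarization j N q). vars u = M - {#j#} + {#N#}"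
    using keys_polarization keys by fastforce
qed

lemma multilinear_identity_exists:
  fixes q :: "'k::field_char_0 nalg"
  assumes TI: "T_ideal TV"
  shows "q \<in> TV \<Longrightarrow> q \<notin> T_B \<Longrightarrow> \<forall>t\<in>Poly_Mapping.keys q. vars t = M \<Longrightarrow>
     \<exists>G V. G \<in> TV \<and> G \<notin> T_B \<and> finite V \<and> card V = size M \<and> (\<forall>t\<in>Poly_Mapping.keys G. vars t = mset_set V)"
proof (induction "size M - card (set_mset M)" arbitrary: q M rule: less_induct)
  case less
  show ?case
  proof (cases "\<exists>j. count M j \<ge> 2")
    case True
    then obtain j where cj: "count M j \<ge> 2" by blast
    define N where "N = Suc (Max (insert 0 (set_mset M)))"
    have N: "N \<notin># M"
    proof
      assume "N \<in># M"
      then have "N \<le> Max (insert 0 (set_mset M))" by simp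
      then show False by (simp add: N_def)
    qed
    define M' where "M' = M - {#j#} + {#N#}"
    obtain q1 where q1: "q1 \<in> TV" "q1 \<notin> T_B" "\<forall>t\<in>Poly_Mapping.keys q1. vars t = M'"
      using linearization_step[OF TI less.prems cj N] unfolding M'_def by blast
    have size_M': "size M' = size M"
      using in_mset_if_count_ge_2[OF cj] by (auto simp: M'_def dest!: multi_member_split)
    have "card (set_mset M') = Suc (card (set_mset M))"
      using set_mset_diff_single[OF cj] N by (simp add: M'_def)
    then have "size M' - card (set_mset M') < size M - card (set_mset M)"
      using size_M' card_set_mset_less_size[OF cj] by simp
    from less.hyps[OF this q1] show ?thesis using size_M' by simp
  next
    case False
    then have "count M x < 2" for x by (simp add: not_le)
    then have "M = mset_set (set_mset M)"
      by (intro multiset_eqI) (auto simp: count_mset_set' count_eq_zero_iff less_2_cases_iff)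
    then show ?thesis using less.prems
      by (intro exI[of _ q] exI[of _ "set_mset M"]) (auto, metis size_mset_set)
  qed
qed

definition lset :: "nmon \<Rightarrow> nat set" where "lset t = set_mset (lvars t)"

lemma subset_mset_set:
  assumes "X \<subseteq># mset_set V" "finite V"
  shows "X = mset_set (set_mset X) \<and> set_mset X \<subseteq> V"
proof
  have c: "count X x \<le> count (mset_set V) x" for x using assms(1) by (simp add: subseteq_mset_def)
  show "X = mset_set (set_mset X)"
  proof (rule multiset_eqI)
    fix x
    have le: "count X x \<le> 1" using c[of x] assms(2) by (simp add: count_mset_set' split: if_splits)
    show "count X x = count (mset_set (set_mset X)) x"
    proof (cases "x \<in># X")
      case True
      then have "1 \<le> count X x" by (simp add: Suc_le_eq)
      moreover have "count (mset_set (set_mset X)) x = 1" using True by simp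
      ultimately show ?thesis using le by linarith
    next
      case False
      then show ?thesis by (simp add: not_in_iff)
    qed
  qed
  show "set_mset X \<subseteq> V" using assms by (metis finite_set_mset_mset_set mset_subset_eqD subsetI)
qed

lemma lvars_multilinear:
  assumes "vars t = mset_set V" "finite V"
  shows "lvars t = mset_set (lset t) \<and> lset t \<subseteq> V"
  using subset_mset_set[OF _ assms(2), of "lvars t"] lvars_subset[of t] assms(1) by (simp add: lset_def)

lemma bicomm_equiv_multilinear:
  assumes "vars t = mset_set V" "vars u = mset_set V" "finite V" "lset t = lset u"
  shows "t \<approx> u"
  using lvars_multilinear[OF assms(1,3)] lvars_multilinear[OF assms(2,3)] assms by (intro bicomm_equiv_if_vars_lvars) auto

locale ml_identity =
  fixes TV :: "'k::field_char_0 nalg set" and G :: "'k nalg" and V :: "nat set"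
  assumes TI: "T_ideal TV" and TBV: "T_B \<subseteq> TV" and GV: "G \<in> TV" and GB: "G \<notin> T_B"
    and finV: "finite V" and keysV: "\<forall>t\<in>Poly_Mapping.keys G. vars t = mset_set V"

sublocale ml_identity \<subseteq> TV: tideal TV by unfold_locales (rule TI)

context ml_identity begin

text \<open>\<open>lset_coeff S T\<close> is the number \<open>\<beta>(S, T)\<close> of the proof sketch.\<close>

definition lset_coeff :: "nat set \<Rightarrow> nat set \<Rightarrow> 'k" where
  "lset_coeff S T = (\<Sum>t\<in>{t\<in>Poly_Mapping.keys G. lset t \<inter> S = T}. Poly_Mapping.lookup G t)"

lemma lset_coeff_split:
  assumes "i \<in> S" "T \<subseteq> S - {i}"
  shows "lset_coeff (S - {i}) T = lset_coeff S T + lset_coeff S (insert i T)"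
proof -
  have eq: "{t\<in>Poly_Mapping.keys G. lset t \<inter> (S - {i}) = T} =
        {t\<in>Poly_Mapping.keys G. lset t \<inter> S = T} \<union> {t\<in>Poly_Mapping.keys G. lset t \<inter> S = insert i T}"
    using assms by blast
  have "lset_coeff (S - {i}) T = (\<Sum>t\<in>{t\<in>Poly_Mapping.keys G. lset t \<inter> S = T} \<union>
      {t\<in>Poly_Mapping.keys G. lset t \<inter> S = insert i T}. Poly_Mapping.lookup G t)"
    unfolding lset_coeff_def eq ..
  also have "\<dots> = lset_coeff S T + lset_coeff S (insert i T)"
    unfolding lset_coeff_def using assms by (intro sum.union_disjoint) auto
  finally show ?thesis .
qed

lemma lset_coeff_not_subset: "\<not> T \<subseteq> S \<Longrightarrow> lset_coeff S T = 0"
  unfolding lset_coeff_def by (rule sum.neutral) auto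

text \<open>Otherwise, grouping the monomials of \<open>G\<close> by their left sets writes \<open>G\<close> as a combination
  of differences of monomials that agree modulo \<open>T(B)\<close>.\<close>

lemma lset_coeff_nonzero: "\<exists>T. lset_coeff V T \<noteq> 0"
proof (rule ccontr)
  assume "\<not> ?thesis"
  then have z: "lset_coeff V T = 0" for T by simp
  define K where "K = Poly_Mapping.keys G"
  have fK: "finite K" by (simp add: K_def)
  define r where "r X = (SOME t. t \<in> K \<and> lset t = X)" for X
  have r: "r (lset t) \<in> K \<and> lset (r (lset t)) = lset t" if "t \<in> K" for t
    unfolding r_def by (rule someI_ex) (use that in blast)
  have cong: "(mon t - mon (r (lset t)) :: 'k nalg) \<in> T_B" if "t \<in> K" for t
    by (rule bicomm_equiv_diff_in_T_B, rule bicomm_equiv_multilinear[OF _ _ finV])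
      (use r[OF that] keysV that in \<open>auto simp: K_def\<close>)
  have G: "G = (\<Sum>t\<in>K. smult_na (Poly_Mapping.lookup G t) (mon t))"
    unfolding K_def by (rule nalg_expansion)
  have "(\<Sum>t\<in>K. smult_na (Poly_Mapping.lookup G t) (mon (r (lset t)))) =
        (\<Sum>X\<in>lset ` K. \<Sum>t\<in>{t. t \<in> K \<and> lset t = X}. smult_na (Poly_Mapping.lookup G t) (mon (r (lset t))))"
    by (rule sum.group[symmetric]) (use fK in auto)
  also have "\<dots> = (\<Sum>X\<in>lset ` K. smult_na (lset_coeff V X) (mon (r X)))"
  proof (intro sum.cong HOL.refl)
    fix X assume "X \<in> lset ` K"
    have sub: "lset t \<subseteq> V" if "t \<in> K" for t using lvars_multilinear[OF _ finV] keysV that by (auto simp: K_def)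
    have "{t. t \<in> K \<and> lset t = X} = {t\<in>Poly_Mapping.keys G. lset t \<inter> V = X}"
      using sub by (auto simp: K_def Int_absorb2)
    moreover have "(\<Sum>t\<in>{t. t \<in> K \<and> lset t = X}. smult_na (Poly_Mapping.lookup G t) (mon (r (lset t)))) =
        (\<Sum>t\<in>{t. t \<in> K \<and> lset t = X}. smult_na (Poly_Mapping.lookup G t) (mon (r X)))"
      by (intro sum.cong) auto
    ultimately show "(\<Sum>t\<in>{t. t \<in> K \<and> lset t = X}. smult_na (Poly_Mapping.lookup G t) (mon (r (lset t)))) =
        smult_na (lset_coeff V X) (mon (r X))"
      by (simp add: lset_coeff_def smult_na_sum_left)
  qed
  also have "\<dots> = 0" by (simp add: z)
  finally have "G = (\<Sum>t\<in>K. smult_na (Poly_Mapping.lookup G t) (mon t - mon (r (lset t))))"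
    using G by (simp add: smult_na_diff sum_subtractf)
  also have "\<dots> \<in> T_B" by (intro TB.sum TB.smult cong)
  finally show False using GB by simp
qed

lemma V_nonempty: "V \<noteq> {}"
proof
  assume "V = {}"
  have "Poly_Mapping.keys G = {}"
  proof (rule ccontr)
    assume "Poly_Mapping.keys G \<noteq> {}"
    then obtain t where "t \<in> Poly_Mapping.keys G" by blast
    then have "mset (leaves t) = {#}" using keysV \<open>V = {}\<close> by simp
    then have "leaves t = []" by simp
    with length_leaves_ge_1[of t] show False by simp
  qed
  then have "G = 0" by simp
  moreover have "(0::'k nalg) \<in> T_B" by (rule TB.zero)
  ultimately show False using GB by simp
qed

lemma lset_coeff_V_V: "lset_coeff V V = 0"
proof -
  have E: "{t\<in>Poly_Mapping.keys G. lset t \<inter> V = V} = {}"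
  proof (rule ccontr)
    assume "\<not> ?thesis"
    then obtain t where t: "t \<in> Poly_Mapping.keys G" "V \<subseteq> lset t" by blast
    have vars_t: "vars t = mset_set V" using keysV t by simp
    from lvars_multilinear[OF vars_t finV] have "lvars t = mset_set V" using t by auto
    then have "vars t - lvars t = {#}" using vars_t by simp
    show False
    proof (cases "is_Mul t")
      case True then show False using rvars_nonempty \<open>vars t - lvars t = {#}\<close> by blast
    next
      case False
      then obtain i where "t = Var i" by (cases t) auto
      then have "lvars t = {#}" by simp
      then show False using \<open>lvars t = mset_set V\<close> V_nonempty finV by (simp add: mset_set_empty_iff)
    qed
  qed
  show ?thesis unfolding lset_coeff_def E by simp
qed

lemma lset_coeff_diag_nonzero_if_minimal:
  assumes "finite S" "\<And>i T. i \<in> S \<Longrightarrow> lset_coeff (S - {i}) T = 0" "lset_coeff S T \<noteq> 0"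
  shows "lset_coeff S S \<noteq> 0"
  using assms(3)
proof (induction "card (S - T)" arbitrary: T rule: less_induct)
  case less
  have TS: "T \<subseteq> S" using less.prems lset_coeff_not_subset by blast
  show ?case
  proof (cases "T = S")
    case True
    with less.prems show ?thesis by simp
  next
    case False
    then obtain i where i: "i \<in> S - T" using TS by blast
    have "T \<subseteq> S - {i}" using i TS by blast
    then have "lset_coeff S (insert i T) \<noteq> 0"
      using lset_coeff_split[of i S T] assms(2)[of i T] less.prems i by auto
    moreover have "card (S - insert i T) < card (S - T)"
      using i assms(1) by (intro psubset_card_mono) auto
    ultimately show ?thesis using less.hyps by blast
  qed
qed

lemma lset_coeff_diag_nonzero: "\<exists>S. S \<subset> V \<and> lset_coeff S S \<noteq> 0"
proof -
  define P where "P S \<longleftrightarrow> S \<subseteq> V \<and> (\<exists>T. lset_coeff S T \<noteq> 0)" for S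
  have "P V" unfolding P_def using lset_coeff_nonzero by auto
  then obtain S where S: "P S" and min: "\<And>S'. P S' \<Longrightarrow> card S \<le> card S'"
    using ex_has_least_nat[of P V card] by blast
  have SV: "S \<subseteq> V" using S by (simp add: P_def)
  have finS: "finite S" using SV finV finite_subset by blast
  have "lset_coeff (S - {i}) T = 0" if "i \<in> S" for i T
  proof (rule ccontr)
    assume "lset_coeff (S - {i}) T \<noteq> 0"
    then have "P (S - {i})" using SV by (auto simp: P_def)
    then have "card S \<le> card (S - {i})" by (rule min)
    with card_Diff1_less[OF finS that] show False by simp
  qed
  moreover obtain T where "lset_coeff S T \<noteq> 0" using S by (auto simp: P_def)
  ultimately have "lset_coeff S S \<noteq> 0" by (intro lset_coeff_diag_nonzero_if_minimal finS)
  moreover have "S \<noteq> V" using lset_coeff_V_V calculation by auto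
  ultimately show ?thesis using SV by blast
qed

end

section \<open>Reducing large left sets\<close>

lemma vars_mon_subst: "vars (mon_subst \<sigma> t) = (\<Sum>i\<in>#vars t. vars (\<sigma> i))"
  by (induction t) auto

lemma lvars_mon_subst:
  "lvars (mon_subst \<sigma> t) =
     (\<Sum>i\<in>#lvars t. lvars_factor (\<sigma> i)) + (\<Sum>i\<in>#vars t - lvars t. lvars (\<sigma> i)) \<and>
   lvars_factor (mon_subst \<sigma> t) =
     (\<Sum>i\<in>#lvars_factor t. lvars_factor (\<sigma> i)) + (\<Sum>i\<in>#vars t - lvars_factor t. lvars (\<sigma> i))"
proof (induction t)
  case (Var i)
  then show ?case by (simp add: lvars_factor_def)
next
  case (Mul a b)
  have rvars: "vars (Mul a b) - (lvars_factor a + lvars b) = (vars a - lvars_factor a) + (vars b - lvars b)"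
    using add_diff_add_mset[OF lvars_factor_subset lvars_subset, of a b] by simp
  have "lvars (mon_subst \<sigma> (Mul a b)) = lvars_factor (mon_subst \<sigma> a) + lvars (mon_subst \<sigma> b)"
    by (simp add: lvars_Mul)
  also have "\<dots> = ((\<Sum>i\<in>#lvars_factor a. lvars_factor (\<sigma> i)) + (\<Sum>i\<in>#vars a - lvars_factor a. lvars (\<sigma> i)))
      + ((\<Sum>i\<in>#lvars b. lvars_factor (\<sigma> i)) + (\<Sum>i\<in>#vars b - lvars b. lvars (\<sigma> i)))"
    using Mul.IH by simp
  also have "\<dots> = (\<Sum>i\<in>#lvars_factor a + lvars b. lvars_factor (\<sigma> i))
      + (\<Sum>i\<in>#(vars a - lvars_factor a) + (vars b - lvars b). lvars (\<sigma> i))"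
    by (simp only: image_mset_union sum_mset.union ac_simps)
  also have "\<dots> = (\<Sum>i\<in>#lvars (Mul a b). lvars_factor (\<sigma> i))
      + (\<Sum>i\<in>#vars (Mul a b) - lvars (Mul a b). lvars (\<sigma> i))"
    by (simp only: rvars lvars_Mul)
  finally show ?case by simp
qed

lemma mset_sorted_list_of_set: "finite A \<Longrightarrow> mset (sorted_list_of_set A) = mset_set A"
  by (metis mset_set_set distinct_sorted_list_of_set set_sorted_list_of_set)

lemma sum_single_mset: "finite A \<Longrightarrow> (\<Sum>i\<in>A. {#g i#}) = image_mset g (mset_set A)"
  by (induction A rule: finite_induct) auto

definition split_subst :: "nat set \<Rightarrow> (nat \<Rightarrow> nat) \<Rightarrow> (nat \<Rightarrow> nat) \<Rightarrow> nat \<Rightarrow> nmon" where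
  "split_subst S e f = (\<lambda>i. if i \<in> S then Var (e i) else Mul (Var (e i)) (Var (f i)))"

lemma vars_lset_split_subst:
  assumes finV: "finite V" and vars_t: "vars t = mset_set V" and SV: "S \<subseteq> V"
    and e_inj: "inj_on e V" and f_inj: "inj_on f (V - S)"
  shows "vars (mon_subst (split_subst S e f) t) = mset_set (e ` V) + mset_set (f ` (V - S))"
    and "lset (mon_subst (split_subst S e f) t) = e ` ((lset t \<inter> S) \<union> (V - S))"
proof -
  let ?s = "split_subst S e f"
  have vars_s: "vars (?s i) = {#e i#} + (if i \<in> S then {#} else {#f i#})" for i by (simp add: split_subst_def)
  have "vars (mon_subst ?s t) = (\<Sum>i\<in>V. vars (?s i))"
    by (simp add: vars_mon_subst vars_t sum_unfold_sum_mset)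
  also have "\<dots> = (\<Sum>i\<in>V. {#e i#}) + (\<Sum>i\<in>V. if i \<in> S then {#} else {#f i#})"
    by (simp add: vars_s sum.distrib[symmetric])
  also have "(\<Sum>i\<in>V. if i \<in> S then {#} else {#f i#}) = (\<Sum>i\<in>V - S. {#f i#})"
    by (simp add: sum.If_cases finV Diff_eq)
  finally show "vars (mon_subst ?s t) = mset_set (e ` V) + mset_set (f ` (V - S))"
    using finV e_inj f_inj by (simp add: sum_single_mset image_mset_mset_set)
  have lvars_t: "lvars t = mset_set (lset t)" and lset_t: "lset t \<subseteq> V" using lvars_multilinear[OF vars_t finV] by auto
  have R: "vars t - lvars t = mset_set (V - lset t)" using vars_t lvars_t lset_t finV by (simp add: mset_set_Diff)
  have lvars_factor_s: "lvars_factor (?s i) = {#e i#}" for i by (simp add: split_subst_def lvars_Mul)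
  have set_lvars_s: "set_mset (lvars (?s i)) = (if i \<in> S then {} else {e i})" for i
    by (cases "i \<in> S") (simp_all add: split_subst_def lvars_Mul)
  have "lset (mon_subst ?s t) = (\<Union>i\<in>lset t. {e i}) \<union> (\<Union>i\<in>V - lset t. if i \<in> S then {} else {e i})"
    unfolding lset_def using conjunct1[OF lvars_mon_subst[of ?s t]] lvars_t R lset_t finV
    by (simp add: lvars_factor_s set_lvars_s finite_subset) blast
  also have "\<dots> = e ` (lset t \<union> ((V - lset t) - S))" by auto
  also have "lset t \<union> ((V - lset t) - S) = (lset t \<inter> S) \<union> (V - S)" using lset_t by blast
  finally show "lset (mon_subst ?s t) = e ` ((lset t \<inter> S) \<union> (V - S))" .
qed

lemma is_Mul_split_subst:
  assumes "vars t = mset_set V" "finite V" "S \<subset> V"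
  shows "is_Mul (mon_subst (split_subst S e f) t)"
proof (cases t)
  case (Var i)
  then have "set_mset (vars t) = V" using assms by simp
  then have "V = {i}" using Var by simp
  then have "S = {}" using assms by auto
  then show ?thesis using Var by (simp add: split_subst_def)
qed simp

definition lmul_vars_na :: "nat list \<Rightarrow> 'k::field nalg \<Rightarrow> 'k nalg" where
  "lmul_vars_na xs p = foldr (\<lambda>x q. mul_na (mon (Var x)) q) xs p"
definition rmul_vars_na :: "nat list \<Rightarrow> 'k::field nalg \<Rightarrow> 'k nalg" where
  "rmul_vars_na ys p = foldl (\<lambda>q y. mul_na q (mon (Var y))) p ys"

lemma lmul_vars_na_sum:
  "lmul_vars_na xs (\<Sum>t\<in>K. smult_na (c t) (mon (w t))) =
     (\<Sum>t\<in>K. smult_na (c t) (mon (lmul_vars xs (w t))))"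
  by (induction xs) (simp_all add: lmul_vars_na_def mul_na_sum_right mul_na_smult_right mul_na_mon)

lemma rmul_vars_na_sum:
  "rmul_vars_na ys (\<Sum>t\<in>K. smult_na (c t) (mon (w t))) =
     (\<Sum>t\<in>K. smult_na (c t) (mon (rmul_vars (w t) ys)))"
proof (induction ys arbitrary: w)
  case Nil then show ?case by (simp add: rmul_vars_na_def)
next
  case (Cons y ys)
  have "rmul_vars_na (y # ys) (\<Sum>t\<in>K. smult_na (c t) (mon (w t))) =
      rmul_vars_na ys (\<Sum>t\<in>K. smult_na (c t) (mon (Mul (w t) (Var y))))"
    by (simp add: rmul_vars_na_def mul_na_sum_left mul_na_smult_left mul_na_mon)
  also have "\<dots> = (\<Sum>t\<in>K. smult_na (c t) (mon (rmul_vars (Mul (w t) (Var y)) ys)))" by (rule Cons)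
  finally show ?case by simp
qed

lemma lmul_vars_na_in: "T_ideal I \<Longrightarrow> p \<in> I \<Longrightarrow> lmul_vars_na xs p \<in> I"
  by (induction xs) (auto simp: lmul_vars_na_def T_ideal_def)

lemma rmul_vars_na_in: "T_ideal I \<Longrightarrow> p \<in> I \<Longrightarrow> rmul_vars_na ys p \<in> I"
  unfolding rmul_vars_na_def by (induction ys arbitrary: p) (auto simp: T_ideal_def)

lemma (in tideal) mon_mod_span_if_combination:
  assumes P: "(\<Sum>t\<in>K. smult_na (c t) (mon (W t))) \<in> I" and fK: "finite K" and J: "J \<subseteq> K"
    and cong: "\<And>t. t \<in> J \<Longrightarrow> mon (W t) - mon u \<in> I" and nz: "(\<Sum>t\<in>J. c t) \<noteq> 0"
    and small: "\<And>t. t \<in> K - J \<Longrightarrow> W t \<in> A"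
  shows "\<exists>v \<in> nvs.span (mon ` A). mon u - v \<in> I"
proof
  define \<beta> where "\<beta> = (\<Sum>t\<in>J. c t)"
  define Q where "Q = (\<Sum>t\<in>K - J. smult_na (c t) (mon (W t)))"
  have "(\<Sum>t\<in>K. smult_na (c t) (mon (W t))) =
      (\<Sum>t\<in>J. smult_na (c t) (mon (W t) - mon u)) + (smult_na \<beta> (mon u) + Q)"
    using fK J by (simp add: Q_def \<beta>_def sum.subset_diff[of J K] smult_na_diff sum_subtractf
        smult_na_sum_left)
  moreover have "(\<Sum>t\<in>J. smult_na (c t) (mon (W t) - mon u)) \<in> I"
    by (intro sum smult cong)
  ultimately have "smult_na \<beta> (mon u) + Q \<in> I" using P add_iff by (simp add: add.commute)
  then have "smult_na (inverse \<beta>) (smult_na \<beta> (mon u) + Q) \<in> I" by (rule smult)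
  also have "smult_na (inverse \<beta>) (smult_na \<beta> (mon u) + Q) = mon u - smult_na (- inverse \<beta>) Q"
    using nz by (intro poly_mapping_eqI) (simp add: \<beta>_def lookup_minus lookup_add field_simps)
  finally show "mon u - smult_na (- inverse \<beta>) Q \<in> I" .
  show "smult_na (- inverse \<beta>) Q \<in> nvs.span (mon ` A)"
    unfolding Q_def by (intro nvs.span_scale nvs.span_sum nvs.span_base) (use small in auto)
qed

lemma card_Diff_image_Un_less:
  assumes "finite L" "inj_on e V" "e ` V \<subseteq> L" "T \<subset> S" "S \<subseteq> V"
  shows "card ((L - e ` V) \<union> e ` (T \<union> (V - S))) < card L"
proof (rule psubset_card_mono[OF assms(1)])
  obtain s where s: "s \<in> S" "s \<notin> T" using assms(4) by blast
  then have "e s \<notin> e ` (T \<union> (V - S))"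
    using assms(2,4,5) by (subst inj_on_image_mem_iff[OF assms(2)]) auto
  then show "(L - e ` V) \<union> e ` (T \<union> (V - S)) \<subset> L"
    using s assms(3,4,5) by blast
qed

definition reduce_mon ::
  "nat list \<Rightarrow> nat set \<Rightarrow> (nat \<Rightarrow> nat) \<Rightarrow> (nat \<Rightarrow> nat) \<Rightarrow> nat list \<Rightarrow> nmon \<Rightarrow> nmon" where
  "reduce_mon xs S e f ys t = rmul_vars (lmul_vars xs (mon_subst (split_subst S e f) t)) ys"

lemma mset_set_Diff_add:
  assumes "finite B" "A \<subseteq> B"
  shows "mset_set (B - A) + mset_set A = mset_set B"
proof -
  have "mset_set (B - A) + mset_set A = mset_set ((B - A) \<union> A)"
    using assms by (intro mset_set_Union[symmetric]) (auto intro: finite_subset)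
  also have "(B - A) \<union> A = B" using assms(2) by blast
  finally show ?thesis .
qed

lemma vars_lset_reduce_mon:
  assumes finV: "finite V" and t: "vars t = mset_set V" and SV: "S \<subset> V"
    and e: "inj_on e V" "e ` V \<subseteq> L" and f: "inj_on f (V - S)" "f ` (V - S) \<subseteq> R"
    and LR: "L \<inter> R = {}" "L \<union> R = {1..n}"
    and xs: "mset xs = mset_set (L - e ` V)" and ys: "mset ys = mset_set (R - f ` (V - S))"
  shows "vars (reduce_mon xs S e f ys t) = mset_set {1..n}"
    and "lset (reduce_mon xs S e f ys t) = (L - e ` V) \<union> e ` ((lset t \<inter> S) \<union> (V - S))"
proof -
  have fin: "finite L" "finite R" using LR by (metis finite_Un finite_atLeastAtMost)+
  have "vars (reduce_mon xs S e f ys t)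
      = (mset_set (L - e ` V) + mset_set (e ` V)) + (mset_set (f ` (V - S)) + mset_set (R - f ` (V - S)))"
    using vars_lset_split_subst(1)[OF finV t _ e(1) f(1)] SV
    by (simp add: reduce_mon_def vars_rmul_vars vars_lmul_vars xs ys ac_simps)
  also have "\<dots> = mset_set L + mset_set R"
    using fin e(2) f(2) by (simp add: mset_set_Diff_add add.commute[of "mset_set (f ` (V - S))"])
  also have "\<dots> = mset_set {1..n}" using fin LR by (metis mset_set_Union)
  finally show "vars (reduce_mon xs S e f ys t) = mset_set {1..n}" .
  have "is_Mul (mon_subst (split_subst S e f) t)" by (rule is_Mul_split_subst[OF t finV SV])
  then have "lset (reduce_mon xs S e f ys t) = set xs \<union> lset (mon_subst (split_subst S e f) t)"
    by (simp add: reduce_mon_def lset_def lvars_rmul_vars lvars_lmul_vars is_Mul_lmul_vars)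
  also have "set xs = L - e ` V" using xs fin by (metis finite_Diff set_mset_mset finite_set_mset_mset_set)
  finally show "lset (reduce_mon xs S e f ys t) = (L - e ` V) \<union> e ` ((lset t \<inter> S) \<union> (V - S))"
    using vars_lset_split_subst(2)[OF finV t _ e(1) f(1)] SV by auto
qed

context ml_identity begin

text \<open>If the left set \<open>L\<close> and the right set \<open>R\<close> of \<open>u\<close> both have at least \<open>k \<ge> |V|\<close>
  elements, substitute into \<open>G\<close> so that the monomials whose left set contains \<open>S\<close> all become
  \<open>u\<close>, while the others acquire a strictly smaller left set; as their total coefficient
  \<open>lset_coeff S S\<close> is nonzero, this expresses \<open>u\<close> through smaller left sets.\<close>

lemma reduce_lset:
  assumes SV: "S \<subset> V" and bS: "lset_coeff S S \<noteq> 0" and Vk: "card V \<le> k"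
    and u: "vars u = mset_set {1..n}" and ku: "k \<le> card (lset u)" and kr: "k \<le> n - card (lset u)"
  shows "\<exists>v \<in> nvs.span (mon ` {w. vars w = mset_set {1..n} \<and> card (lset w) < card (lset u)}).
           mon u - v \<in> TV"
proof -
  define L where "L = lset u"
  define R where "R = {1..n} - L"
  have L: "L \<subseteq> {1..n}" using lvars_multilinear[OF u] by (simp add: L_def)
  have fin: "finite L" "finite R" using L finite_subset by (auto simp: R_def)
  have S_sub: "S \<subseteq> V" using SV by auto
  obtain e where e: "inj_on e V" "e ` V \<subseteq> L"
    using card_le_inj[OF finV fin(1)] Vk ku by (auto simp: L_def)
  have "card (V - S) \<le> card R"
    using card_Diff_subset[OF finite_subset[OF S_sub finV] S_sub] Vk kr L
    by (simp add: L_def R_def card_Diff_subset finite_subset)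
  then obtain f where f: "inj_on f (V - S)" "f ` (V - S) \<subseteq> R"
    using card_le_inj[OF _ fin(2)] finV by blast
  define xs where "xs = sorted_list_of_set (L - e ` V)"
  define ys where "ys = sorted_list_of_set (R - f ` (V - S))"
  define W where "W = reduce_mon xs S e f ys"
  have W: "vars (W t) = mset_set {1..n}" "lset (W t) = (L - e ` V) \<union> e ` ((lset t \<inter> S) \<union> (V - S))"
    if "t \<in> Poly_Mapping.keys G" for t
    using vars_lset_reduce_mon[OF finV _ SV e f, where t=t and n=n and xs=xs and ys=ys] keysV that fin L
    by (auto simp: W_def xs_def ys_def R_def mset_sorted_list_of_set)
  have "rmul_vars_na ys (lmul_vars_na xs (subst_na (\<lambda>i. mon (split_subst S e f i)) G)) =
      (\<Sum>t\<in>Poly_Mapping.keys G. smult_na (Poly_Mapping.lookup G t) (mon (W t)))"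
    by (simp add: subst_na_def subst_mon_mon_subst lmul_vars_na_sum rmul_vars_na_sum W_def
        reduce_mon_def)
  moreover have "rmul_vars_na ys (lmul_vars_na xs (subst_na (\<lambda>i. mon (split_subst S e f i)) G)) \<in> TV"
    by (intro rmul_vars_na_in lmul_vars_na_in TI TV.subst GV)
  ultimately show ?thesis
  proof (intro TV.mon_mod_span_if_combination[where J = "{t\<in>Poly_Mapping.keys G. S \<subseteq> lset t}"])
    fix t assume t: "t \<in> {t\<in>Poly_Mapping.keys G. S \<subseteq> lset t}"
    then have "lset (W t) = lset u" using W(2)[of t] e(2) S_sub by (auto simp: L_def)
    then have "W t \<approx> u" using W(1)[of t] t u by (intro bicomm_equiv_multilinear) auto
    then show "mon (W t) - mon u \<in> TV" using bicomm_equiv_diff_in_T_B TBV by blast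
  next
    have "{t\<in>Poly_Mapping.keys G. S \<subseteq> lset t} = {t\<in>Poly_Mapping.keys G. lset t \<inter> S = S}"
      by blast
    then show "(\<Sum>t\<in>{t\<in>Poly_Mapping.keys G. S \<subseteq> lset t}. Poly_Mapping.lookup G t) \<noteq> 0"
      using bS by (simp add: lset_coeff_def)
  next
    fix t assume t: "t \<in> Poly_Mapping.keys G - {t\<in>Poly_Mapping.keys G. S \<subseteq> lset t}"
    then have "card (lset (W t)) < card L"
      using W(2)[of t] by (simp, intro card_Diff_image_Un_less fin e S_sub) auto
    then show "W t \<in> {w. vars w = mset_set {1..n} \<and> card (lset w) < card (lset u)}"
      using W(1)[of t] t by (simp add: L_def)
  qed auto
qed

end

lemma (in vector_space) independent_image_if_trivial_relations:
  assumes fin: "finite S" and triv: "\<And>d. (\<Sum>t\<in>S. d t *s v t) = 0 \<Longrightarrow> \<forall>t\<in>S. d t = 0"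
  shows "inj_on v S" and "independent (v ` S)"
proof -
  show inj: "inj_on v S"
  proof (rule inj_onI, rule ccontr)
    fix s t assume st: "s \<in> S" "t \<in> S" "v s = v t" "s \<noteq> t"
    define d where "d x = (if x = s then 1 else if x = t then -1 else (0 :: 'a))" for x
    have "(\<Sum>x\<in>S. d x *s v x) = (\<Sum>x\<in>{s, t}. d x *s v x)"
      using st fin by (intro sum.mono_neutral_right) (auto simp: d_def)
    also have "\<dots> = 0" using st by (simp add: d_def)
    finally have "d s = 0" using triv st(1) by blast
    then show False by (simp add: d_def)
  qed
  show "independent (v ` S)"
  proof
    assume "dependent (v ` S)"
    then obtain T u where T: "finite T" "T \<subseteq> v ` S" "(\<Sum>x\<in>T. u x *s x) = 0" "\<exists>x\<in>T. u x \<noteq> 0"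
      unfolding dependent_explicit by blast
    define d where "d t = (if v t \<in> T then u (v t) else 0)" for t
    have "(\<Sum>t\<in>S. d t *s v t) = (\<Sum>t\<in>S. if v t \<in> T then u (v t) *s v t else 0)"
      by (intro sum.cong) (auto simp: d_def)
    also have "\<dots> = (\<Sum>t\<in>{t\<in>S. v t \<in> T}. u (v t) *s v t)"
      using fin by (simp add: sum.inter_filter)
    also have "\<dots> = (\<Sum>x\<in>v ` {t\<in>S. v t \<in> T}. u x *s x)"
      using inj_on_subset[OF inj, of "{t\<in>S. v t \<in> T}"] by (simp add: sum.reindex)
    also have "v ` {t\<in>S. v t \<in> T} = T" using T(2) by blast
    finally have "\<forall>t\<in>S. d t = 0" using T(3) by (intro triv) simp
    moreover obtain x where x: "x \<in> T" "u x \<noteq> 0" using T(4) by blast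
    moreover obtain t where "t \<in> S" "x = v t" using T(2) x(1) by blast
    ultimately show False by (auto simp: d_def)
  qed
qed

lemma (in tideal) span_mod_trans:
  assumes "v0 \<in> nvs.span (mon ` A)" "p - v0 \<in> I"
    and A: "\<And>w. w \<in> A \<Longrightarrow> \<exists>v \<in> nvs.span B. mon w - v \<in> I"
  shows "\<exists>v \<in> nvs.span B. p - v \<in> I"
proof -
  have "\<exists>v \<in> nvs.span B. v0 - v \<in> I" using assms(1)
  proof (induction rule: nvs.span_induct_alt)
    case base
    show ?case by (intro bexI[of _ 0]) (simp_all add: zero nvs.span_zero)
  next
    case (step c x y)
    then obtain w where w: "w \<in> A" "x = mon w" by blast
    obtain v1 where v1: "v1 \<in> nvs.span B" "mon w - v1 \<in> I" using A[OF w(1)] by blast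
    obtain v2 where v2: "v2 \<in> nvs.span B" "y - v2 \<in> I" using step.IH by blast
    have "smult_na c x + y - (smult_na c v1 + v2) = smult_na c (mon w - v1) + (y - v2)"
      using w(2) by (simp add: smult_na_diff algebra_simps)
    also have "\<dots> \<in> I" using v1 v2 by (intro add smult)
    finally show ?case using v1 v2 by (intro bexI[of _ "smult_na c v1 + v2"]) (auto intro: nvs.span_add nvs.span_scale)
  qed
  then obtain v where "v \<in> nvs.span B" "v0 - v \<in> I" by blast
  moreover have "p - v = (p - v0) + (v0 - v)" by simp
  ultimately show ?thesis using add[OF assms(2)] by metis
qed

lemma (in tideal) card_indep_mod_le:
  assumes B: "finite B" and ind: "indep_mod I S"
    and span: "\<And>t. t \<in> S \<Longrightarrow> \<exists>v \<in> nvs.span (mon ` B). mon t - v \<in> I"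
  shows "card S \<le> card B"
proof (cases "finite S")
  case finS: True
  obtain v where v: "\<And>t. t \<in> S \<Longrightarrow> v t \<in> nvs.span (mon ` B) \<and> mon t - v t \<in> I"
    using span by metis
  have triv: "\<forall>t\<in>S. d t = 0" if "(\<Sum>t\<in>S. smult_na (d t) (v t)) = 0" for d
  proof -
    have "(\<Sum>t\<in>S. smult_na (d t) (mon t)) =
        (\<Sum>t\<in>S. smult_na (d t) (mon t - v t)) + (\<Sum>t\<in>S. smult_na (d t) (v t))"
      by (simp add: smult_na_diff sum_subtractf)
    also have "\<dots> \<in> I" using v that by (simp, intro sum smult) auto
    finally show ?thesis using ind unfolding indep_mod_def by blast
  qed
  have "card (v ` S) \<le> card (mon ` B :: 'k nalg set)"
    using nvs.independent_span_bound[OF finite_imageI[OF B]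
        nvs.independent_image_if_trivial_relations(2)[OF finS triv]] v by blast
  also have "\<dots> \<le> card B" by (rule card_image_le[OF B])
  finally show ?thesis
    using nvs.independent_image_if_trivial_relations(1)[OF finS triv] by (simp add: card_image)
qed simp

lemma (in tideal) codim_le_card:
  assumes "finite B"
    and span: "\<And>t. t \<in> multilin_mons n \<Longrightarrow> \<exists>v \<in> nvs.span (mon ` B). mon t - v \<in> I"
  shows "codim I n \<le> card B"
proof -
  have bound: "card S \<le> card B" if "S \<subseteq> multilin_mons n" "indep_mod I S" for S
    using that span by (intro card_indep_mod_le[OF assms(1)]) auto
  show ?thesis
    unfolding codim_def
  proof (rule Max.boundedI)
    show "finite {card S |S. S \<subseteq> multilin_mons n \<and> indep_mod I S}"
      by (rule finite_subset[of _ "{..card B}"]) (auto dest: bound)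
    show "{card S |S. S \<subseteq> multilin_mons n \<and> indep_mod I S} \<noteq> {}"
      by (auto simp: indep_mod_def intro!: exI[of _ "{}"])
  qed (use bound in blast)
qed

text \<open>The left sets to which \<open>reduce_lset\<close> does not apply.\<close>

definition small_lsets :: "nat \<Rightarrow> nat \<Rightarrow> nat set set" where
  "small_lsets k n = {X. X \<subseteq> {1..n} \<and> (card X < k \<or> n - card X < k)}"

definition lset_rep :: "nat \<Rightarrow> nat set \<Rightarrow> nmon" where
  "lset_rep n X = (SOME w. vars w = mset_set {1..n} \<and> lset w = X)"

definition small_lset_reps :: "nat \<Rightarrow> nat \<Rightarrow> nmon set" where
  "small_lset_reps k n = lset_rep n ` small_lsets k n"

lemma finite_small_lsets: "finite (small_lsets k n)"
  unfolding small_lsets_def by (rule finite_subset[of _ "Pow {1..n}"]) auto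

lemma finite_small_lset_reps: "finite (small_lset_reps k n)"
  unfolding small_lset_reps_def by (simp add: finite_small_lsets)

context ml_identity begin

lemma mon_mod_span_small_lset_reps:
  assumes Vk: "card V \<le> k"
  shows "vars u = mset_set {1..n} \<Longrightarrow> \<exists>v \<in> nvs.span (mon ` small_lset_reps k n). mon u - v \<in> TV"
proof (induction "card (lset u)" arbitrary: u rule: less_induct)
  case less
  obtain S where S: "S \<subset> V" "lset_coeff S S \<noteq> 0" using lset_coeff_diag_nonzero by blast
  have lset_u: "lset u \<subseteq> {1..n}" using lvars_multilinear[OF less.prems] by simp
  show ?case
  proof (cases "card (lset u) < k \<or> n - card (lset u) < k")
    case True
    then have X: "lset u \<in> small_lsets k n" using lset_u by (simp add: small_lsets_def)
    have "\<exists>w. vars w = mset_set {1..n} \<and> lset w = lset u" using less.prems by blast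
    then have "vars (lset_rep n (lset u)) = mset_set {1..n} \<and> lset (lset_rep n (lset u)) = lset u"
      unfolding lset_rep_def by (rule someI_ex)
    then have "u \<approx> lset_rep n (lset u)"
      using less.prems by (intro bicomm_equiv_multilinear[of _ "{1..n}"]) auto
    then have "mon u - mon (lset_rep n (lset u)) \<in> TV" using bicomm_equiv_diff_in_T_B TBV by blast
    moreover have "mon (lset_rep n (lset u)) \<in> nvs.span (mon ` small_lset_reps k n)"
      using X by (intro nvs.span_base) (auto simp: small_lset_reps_def)
    ultimately show ?thesis by blast
  next
    case False
    then obtain v0 where v0:
      "v0 \<in> nvs.span (mon ` {w. vars w = mset_set {1..n} \<and> card (lset w) < card (lset u)})"
      "mon u - v0 \<in> TV"
      using reduce_lset[OF S Vk less.prems] by auto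
    show ?thesis by (rule TV.span_mod_trans[OF v0]) (use less.hyps in blast)
  qed
qed

lemma codim_le_card_small_lset_reps:
  assumes "card V \<le> k"
  shows "codim TV n \<le> card (small_lset_reps k n)"
proof (rule TV.codim_le_card[OF finite_small_lset_reps])
  fix t assume "t \<in> multilin_mons n"
  then have "vars t = mset_set {1..n}"
    by (simp add: multilin_mons_def atLeastLessThanSuc_atLeastAtMost del: upt_Suc)
  then show "\<exists>v \<in> nvs.span (mon ` small_lset_reps k n). mon t - v \<in> TV"
    by (rule mon_mod_span_small_lset_reps[OF assms])
qed

end

section \<open>Counting left sets\<close>

lemma binomial_le_power_pred: "1 \<le> n \<Longrightarrow> j < k \<Longrightarrow> n choose j \<le> n ^ (k - 1)"
proof -
  assume n: "1 \<le> n" and j: "j < k"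
  have "n choose j \<le> n ^ j"
    by (cases "j \<le> n") (auto intro: binomial_le_pow simp: binomial_eq_0)
  also have "n ^ j \<le> n ^ (k - 1)" using n j by (intro power_increasing) auto
  finally show ?thesis .
qed

lemma card_small_subsets_le: "1 \<le> n \<Longrightarrow> card {X. X \<subseteq> {1..n} \<and> card X < k} \<le> k * n ^ (k - 1)"
proof -
  assume n: "1 \<le> n"
  have eq: "{X. X \<subseteq> {1..n} \<and> card X < k} = (\<Union>j\<in>{..<k}. {X. X \<subseteq> {1..n} \<and> card X = j})" by auto
  have "card {X. X \<subseteq> {1..n} \<and> card X < k} \<le> (\<Sum>j\<in>{..<k}. card {X. X \<subseteq> {1..n} \<and> card X = j})"
    unfolding eq by (rule card_UN_le) simp
  also have "\<dots> = (\<Sum>j\<in>{..<k}. n choose j)" by (simp add: n_subsets)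
  also have "\<dots> \<le> (\<Sum>j\<in>{..<k}. n ^ (k - 1))" by (intro sum_mono binomial_le_power_pred n) auto
  also have "\<dots> = k * n ^ (k - 1)" by simp
  finally show ?thesis .
qed

lemma card_small_lsets_le:
  assumes n: "1 \<le> n"
  shows "card (small_lsets k n) \<le> 2 * k * n ^ (k - 1)"
proof -
  define I1 where "I1 = {X. X \<subseteq> {1..n} \<and> card X < k}"
  have fI1: "finite I1" unfolding I1_def by (rule finite_subset[of _ "Pow {1..n}"]) auto
  have sub: "small_lsets k n \<subseteq> I1 \<union> (\<lambda>Y. {1..n} - Y) ` I1"
  proof
    fix X assume "X \<in> small_lsets k n"
    then have X: "X \<subseteq> {1..n}" "card X < k \<or> n - card X < k" by (auto simp: small_lsets_def)
    show "X \<in> I1 \<union> (\<lambda>Y. {1..n} - Y) ` I1"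
    proof (cases "card X < k")
      case True then show ?thesis using X by (simp add: I1_def)
    next
      case False
      then have "n - card X < k" using X by simp
      moreover have "card ({1..n} - X) = n - card X" using X(1) by (simp add: card_Diff_subset finite_subset)
      ultimately have "{1..n} - X \<in> I1" by (simp add: I1_def)
      moreover have "X = {1..n} - ({1..n} - X)" using X(1) by blast
      ultimately show ?thesis by blast
    qed
  qed
  have "card (small_lsets k n) \<le> card (I1 \<union> (\<lambda>Y. {1..n} - Y) ` I1)"
    using fI1 by (intro card_mono sub) auto
  also have "\<dots> \<le> card I1 + card ((\<lambda>Y. {1..n} - Y) ` I1)" by (rule card_Un_le)
  also have "\<dots> \<le> card I1 + card I1" using card_image_le[OF fI1] by simp
  also have "\<dots> \<le> 2 * k * n ^ (k - 1)" using card_small_subsets_le[OF n, of k] by (simp add: I1_def)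
  finally show ?thesis .
qed

lemma limsup_root_le_1_if_poly_bound:
  fixes c :: "nat \<Rightarrow> nat" and C :: real
  assumes C: "C > 0" and b: "\<And>n. n \<ge> 1 \<Longrightarrow> real (c n) \<le> C * real n ^ d"
  shows "limsup (\<lambda>n. ereal (root n (real (c n)))) \<le> 1"
proof -
  have ev: "eventually (\<lambda>n. ereal (root n (real (c n))) \<le> ereal (root n C * root n (real n) ^ d))
      sequentially"
  proof (rule eventually_sequentiallyI[of 1])
    fix n :: nat assume n: "1 \<le> n"
    have "root n (real (c n)) \<le> root n (C * real n ^ d)"
      using n b[OF n] by simp
    also have "\<dots> = root n C * root n (real n) ^ d"
      using n by (simp add: real_root_mult real_root_power)
    finally show "ereal (root n (real (c n))) \<le> ereal (root n C * root n (real n) ^ d)" by simp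
  qed
  have lim: "(\<lambda>n. root n C * root n (real n) ^ d) \<longlonglongrightarrow> 1 * 1 ^ d"
    using C by (intro tendsto_mult tendsto_power LIMSEQ_root_const LIMSEQ_root)
  have "limsup (\<lambda>n. ereal (root n (real (c n)))) \<le> limsup (\<lambda>n. ereal (root n C * root n (real n) ^ d))"
    by (rule Limsup_mono[OF ev])
  also have "\<dots> = ereal 1"
    using lim by (intro lim_imp_Limsup) (auto intro: tendsto_ereal)
  finally show ?thesis by (simp add: one_ereal_def)
qed

lemma deg_FB_representative:
  obtains g where "f - g \<in> T_B" "\<forall>t\<in>Poly_Mapping.keys g. mdeg t \<le> deg_FB f"
proof -
  define P where "P d \<longleftrightarrow> (\<exists>g. f - g \<in> T_B \<and> (\<forall>t\<in>Poly_Mapping.keys g. mdeg t \<le> d))" for d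
  have "P (Max (insert 0 (mdeg ` Poly_Mapping.keys f)))"
    unfolding P_def by (intro exI[of _ f]) (auto simp: TB.zero)
  then have "P (LEAST d. P d)" by (rule LeastI)
  then show ?thesis using that unfolding P_def deg_FB_def by blast
qed

lemma multilinear_identity_of_degree_le:
  fixes g :: "'k::field_char_0 nalg"
  assumes TI: "T_ideal TV" and TBV: "T_B \<subseteq> TV" and g: "g \<in> TV" "g \<notin> T_B"
    and deg: "\<forall>t\<in>Poly_Mapping.keys g. mdeg t \<le> k"
  shows "\<exists>G V. ml_identity TV G V \<and> card V \<le> k"
proof -
  obtain q where q: "q \<in> TV" "q \<notin> T_B" "Poly_Mapping.keys q \<subseteq> Poly_Mapping.keys g"
    "\<forall>t\<in>Poly_Mapping.keys q. \<forall>u\<in>Poly_Mapping.keys q. vars t = vars u"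
    using multihomogeneous_identity[OF TI g] by blast
  have "q \<noteq> 0" using q(2) TB.zero by auto
  then obtain t0 where t0: "t0 \<in> Poly_Mapping.keys q" by fastforce
  have "\<forall>t\<in>Poly_Mapping.keys q. vars t = vars t0" using q(4) t0 by blast
  then obtain G V where GV: "G \<in> TV" "G \<notin> T_B" "finite V" "card V = size (vars t0)"
    "\<forall>t\<in>Poly_Mapping.keys G. vars t = mset_set V"
    using multilinear_identity_exists[OF TI q(1,2)] by blast
  have "size (vars t0) \<le> k" using deg q(3) t0 by (auto simp: mdeg_def)
  then show ?thesis using GV TI TBV by (intro exI conjI) (auto simp: ml_identity_def)
qed

context ml_identity begin

lemma codim_le_poly:
  assumes "card V \<le> k" "n \<ge> 1"
  shows "codim TV n \<le> 2 * k * n ^ (k - 1)"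
proof -
  have "codim TV n \<le> card (small_lset_reps k n)" by (rule codim_le_card_small_lset_reps[OF assms(1)])
  also have "\<dots> \<le> card (small_lsets k n)"
    unfolding small_lset_reps_def by (rule card_image_le[OF finite_small_lsets])
  also have "\<dots> \<le> 2 * k * n ^ (k - 1)" by (rule card_small_lsets_le[OF assms(2)])
  finally show ?thesis .
qed

lemma card_V_ge_1: "card V \<ge> 1"
  using V_nonempty finV by (simp add: Suc_le_eq card_gt_0_iff)

end

theorem theorem4p6:
  fixes TV :: "'k::field_char_0 nalg set" and f :: "'k nalg" and k :: nat
  assumes "subvariety_B TV"
    and "f \<in> TV"
    and "f \<notin> T_B"
    and "deg_FB f = k"
  shows "(\<exists>P :: real poly. degree P = k - 1 \<and> (\<forall>n\<ge>1. real (codim TV n) \<le> poly P (real n)))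
       \<and> limsup (\<lambda>n. ereal (root n (real (codim TV n)))) \<le> 1"
proof -
  have TI: "T_ideal TV" and TBV: "T_B \<subseteq> TV" using assms(1) by (auto simp: subvariety_B_def)
  interpret TV: tideal TV by unfold_locales (rule TI)
  obtain g where g: "f - g \<in> T_B" "\<forall>t\<in>Poly_Mapping.keys g. mdeg t \<le> k"
    using deg_FB_representative assms(4) by metis
  have "g \<in> TV" using TV.diff[OF assms(2), of "f - g"] g(1) TBV by auto
  moreover have "g \<notin> T_B" using TB.add[OF g(1), of g] assms(3) by auto
  ultimately obtain G V where ml: "ml_identity TV G V" and Vk: "card V \<le> k"
    using multilinear_identity_of_degree_le[OF TI TBV _ _ g(2)] by blast
  have k: "k \<ge> 1" using ml_identity.card_V_ge_1[OF ml] Vk by simp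
  have bound: "real (codim TV n) \<le> 2 * real k * real n ^ (k - 1)" if "n \<ge> 1" for n
  proof -
    have "real (codim TV n) \<le> real (2 * k * n ^ (k - 1))"
      using ml_identity.codim_le_poly[OF ml Vk that] by (simp only: of_nat_le_iff)
    then show ?thesis by simp
  qed
  define P :: "real poly" where "P = monom (2 * real k) (k - 1)"
  have "degree P = k - 1" using k by (simp add: P_def degree_monom_eq)
  moreover have "\<forall>n\<ge>1. real (codim TV n) \<le> poly P (real n)"
    using bound by (simp add: P_def poly_monom)
  moreover have "limsup (\<lambda>n. ereal (root n (real (codim TV n)))) \<le> 1"
    using k by (intro limsup_root_le_1_if_poly_bound[OF _ bound]) auto
  ultimately show ?thesis by blast
qed

end
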